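(* Let $d\geq 2$ and let $n_1\geq n_2\geq\cdots\geq n_d\geq 2$ be integers, and let $G=\textsc{Grid}(n_1,\ldots,n_d)$. Then $G$ admits a $Q_d$-magic vertex labeling $f$ and a $Q_d$-magic edge labeling $g$.
   Context: For integers $k\le \ell$, $[k]=\{1,\ldots,k\}$. The grid graph $\textsc{Grid}(n_1,\ldots,n_d)$ has vertex set $V=[n_1]\times\cdots\times[n_d]$ and edge set $E=\{\{\mathbf x,\mathbf y\}: \mathbf x,\mathbf y\in V,\ \sum_{i=1}^d|x_i-y_i|=1\}$ (the Cartesian product of $d$ paths with $n_1,\ldots,n_d$ vertices). The $d$-cube $Q_d$ is $\textsc{Grid}(2,\ldots,2)$ ($d$ entries). For graphs $G=(V,E)$ and $H$: a bijection $f:V\to\{1,\ldots,|V|\}$ is an $H$-magic vertex labeling if there is a constant $c$ with $\sum_{v\in V(H')}f(v)=c$ for every subgraph $H'\subseteq G$ isomorphic to $H$; a bijection $g:E\to\{1,\ldots,|E|\}$ is an $H$-magic edge labeling if there is a constant $c'$ with $\sum_{e\in E(H')}g(e)=c'$ for every subgraph $H'\subseteq G$ isomorphic to $H$. The constants $c$, $c'$ are called the $H$-magic sums. *)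

theory Defs
  imports Main
begin

definition grid_vertices :: "nat list \<Rightarrow> nat list set" where
  "grid_vertices ns = {xs. length xs = length ns \<and> (\<forall>i<length ns. 1 \<le> xs ! i \<and> xs ! i \<le> ns ! i)}"

definition grid_edges :: "nat list \<Rightarrow> nat list set set" where
  "grid_edges ns = {{xs, ys} | xs ys. xs \<in> grid_vertices ns \<and> ys \<in> grid_vertices ns \<and>
      (\<Sum>i<length ns. \<bar>int (xs ! i) - int (ys ! i)\<bar>) = 1}"

definition cube_vertices :: "nat \<Rightarrow> nat list set" where
  "cube_vertices d = grid_vertices (replicate d 2)"

definition cube_edges :: "nat \<Rightarrow> nat list set set" where
  "cube_edges d = grid_edges (replicate d 2)"

definition iso_subgraph ::
  "'a set \<Rightarrow> 'a set set \<Rightarrow> 'b set \<Rightarrow> 'b set set \<Rightarrow> 'a set \<Rightarrow> 'a set set \<Rightarrow> bool" where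
  "iso_subgraph V E VH EH V' E' \<longleftrightarrow>
     V' \<subseteq> V \<and> E' \<subseteq> E \<and> (\<forall>e\<in>E'. e \<subseteq> V') \<and>
     (\<exists>\<phi>. bij_betw \<phi> VH V' \<and>
        (\<forall>u\<in>VH. \<forall>v\<in>VH. {u, v} \<in> EH \<longleftrightarrow> {\<phi> u, \<phi> v} \<in> E'))"

definition magic_vertex_labeling ::
  "'a set \<Rightarrow> 'a set set \<Rightarrow> 'b set \<Rightarrow> 'b set set \<Rightarrow> ('a \<Rightarrow> nat) \<Rightarrow> bool" where
  "magic_vertex_labeling V E VH EH f \<longleftrightarrow>
     bij_betw f V {1..card V} \<and>
     (\<exists>c. \<forall>V' E'. iso_subgraph V E VH EH V' E' \<longrightarrow> (\<Sum>v\<in>V'. f v) = c)"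

definition magic_edge_labeling ::
  "'a set \<Rightarrow> 'a set set \<Rightarrow> 'b set \<Rightarrow> 'b set set \<Rightarrow> ('a set \<Rightarrow> nat) \<Rightarrow> bool" where
  "magic_edge_labeling V E VH EH g \<longleftrightarrow>
     bij_betw g E {1..card E} \<and>
     (\<exists>c. \<forall>V' E'. iso_subgraph V E VH EH V' E' \<longrightarrow> (\<Sum>e\<in>E'. g e) = c)"

end

theory Submission
  imports Defs
begin

text \<open>A copy of \<open>Q_d\<close> in a \<open>d\<close>-dimensional grid is axis-parallel: two of its edges at a vertex
  \<open>x\<close> cannot point in the same grid direction, since the 4-cycle of the cube through them would
  then have to return to \<open>x\<close>. So the copy carries commuting involutions \<open>\<tau> j\<close>, moving each
  vertex to its cube neighbour in direction \<open>j\<close>, and a labeling is \<open>Q_d\<close>-magic as soon as it is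
  a sum of terms \<open>h\<close> with \<open>h x + h (\<tau> j x)\<close> constant for some fixed \<open>j\<close>: over any copy such a
  term sums to \<open>2 ^ (d - 1)\<close> times that constant.

  The vertex label is a mixed-radix number. Its two lowest digits enumerate the rectangle
  \<open>[n0] \<times> [n1]\<close> of the first two coordinates as a sum of two terms, reflected along
  directions 0 and 1 respectively; the higher digits are read upwards or downwards according to
  the parity of the first coordinate, hence are reflected along direction 0. Edges are numbered direction by direction. An edge in
  direction \<open>j \<ge> 2\<close> receives the vertex label of its lower end in the grid shortened by one in
  direction \<open>j\<close>, which is reflected along directions 0 and 1 as before. In the plane the edges
  are numbered so that the two plane edges at a vertex have labels adding up to an amount that is
  reflected along both directions, and their higher digits are read along the parity of the other
  plane coordinate.\<close>

section \<open>Grids\<close>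

lemma grid_vertices_Nil [simp]: "grid_vertices [] = {[]}"
  by (auto simp: grid_vertices_def)

lemma Cons_in_grid_vertices_iff [simp]:
  "x # xs \<in> grid_vertices (n # ns) \<longleftrightarrow> 1 \<le> x \<and> x \<le> n \<and> xs \<in> grid_vertices ns"
  by (auto simp: grid_vertices_def nth_Cons split: nat.splits)

lemma Nil_notin_grid_vertices_Cons [simp]: "[] \<notin> grid_vertices (n # ns)"
  by (simp add: grid_vertices_def)

lemma grid_vertices_Cons:
  "grid_vertices (n # ns) = (\<lambda>(a, xs). a # xs) ` ({1..n} \<times> grid_vertices ns)"
proof (rule set_eqI)
  fix ys
  show "ys \<in> grid_vertices (n # ns) \<longleftrightarrow> ys \<in> (\<lambda>(a, xs). a # xs) ` ({1..n} \<times> grid_vertices ns)"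
    by (cases ys) auto
qed

lemma Cons_Cons_in_grid_vertices_iff:
  "x \<in> grid_vertices (n0 # n1 # R) \<longleftrightarrow>
   (\<exists>a b r. x = a # b # r \<and> 1 \<le> a \<and> a \<le> n0 \<and> 1 \<le> b \<and> b \<le> n1 \<and> r \<in> grid_vertices R)"
  by (cases x; cases "tl x") auto

lemma finite_card_grid_vertices:
  "finite (grid_vertices ns) \<and> card (grid_vertices ns) = prod_list ns"
proof (induction ns)
  case (Cons n ns)
  have "inj_on (\<lambda>(a, xs). a # xs) ({1..n} \<times> grid_vertices ns)"
    by (auto simp: inj_on_def)
  with Cons show ?case
    by (simp add: grid_vertices_Cons card_image card_cartesian_product)
qed simp

lemma finite_grid_vertices [simp]: "finite (grid_vertices ns)"
  using finite_card_grid_vertices by blast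

lemma card_grid_vertices: "card (grid_vertices ns) = prod_list ns"
  using finite_card_grid_vertices by blast

lemma grid_vertex_length: "x \<in> grid_vertices ns \<Longrightarrow> length x = length ns"
  by (simp add: grid_vertices_def)

lemma grid_vertex_bounds: "x \<in> grid_vertices ns \<Longrightarrow> i < length ns \<Longrightarrow> 1 \<le> x ! i \<and> x ! i \<le> ns ! i"
  by (simp add: grid_vertices_def)

definition grid_step :: "nat list \<Rightarrow> nat list \<Rightarrow> nat \<Rightarrow> bool" where
  "grid_step x y j \<longleftrightarrow> length y = length x \<and> j < length x \<and> (\<forall>i<length x. i \<noteq> j \<longrightarrow> y ! i = x ! i)
     \<and> (y ! j = Suc (x ! j) \<or> x ! j = Suc (y ! j))"

lemma grid_step_sym: "grid_step x y j \<Longrightarrow> grid_step y x j"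
  by (auto simp: grid_step_def)

lemma grid_step_dir_unique: "grid_step x y j \<Longrightarrow> grid_step x y k \<Longrightarrow> j = k"
  unfolding grid_step_def by (metis Suc_n_not_n n_not_Suc_n)

lemma grid_step_neq: "grid_step x y j \<Longrightarrow> x \<noteq> y"
  by (auto simp: grid_step_def)

lemma grid_step_length: "grid_step x y j \<Longrightarrow> length y = length x"
  by (simp add: grid_step_def)

lemma grid_step_dir_less: "grid_step x y j \<Longrightarrow> j < length x"
  by (simp add: grid_step_def)

lemma grid_step_nth_other: "grid_step x y j \<Longrightarrow> i < length x \<Longrightarrow> i \<noteq> j \<Longrightarrow> y ! i = x ! i"
  by (simp add: grid_step_def)

lemma grid_step_nth_dir: "grid_step x y j \<Longrightarrow> y ! j = Suc (x ! j) \<or> x ! j = Suc (y ! j)"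
  by (simp add: grid_step_def)

lemma grid_step_nth_dir_neq: "grid_step x y j \<Longrightarrow> y ! j \<noteq> x ! j"
  by (auto simp: grid_step_def)

lemma grid_step_list_update: "j < length x \<Longrightarrow> grid_step x (x[j := Suc (x ! j)]) j"
  by (auto simp: grid_step_def)

lemma grid_step_eq_list_update:
  assumes "grid_step x y j" "y ! j = Suc (x ! j)"
  shows "y = x[j := Suc (x ! j)]"
  by (rule nth_equalityI) (use assms in \<open>auto simp: grid_step_def nth_list_update\<close>)

lemma sum_abs_eq_1_imp_single:
  fixes a :: "nat \<Rightarrow> int"
  assumes "finite I" "(\<Sum>i\<in>I. \<bar>a i\<bar>) = 1"
  shows "\<exists>j\<in>I. \<bar>a j\<bar> = 1 \<and> (\<forall>i\<in>I. i \<noteq> j \<longrightarrow> a i = 0)"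
proof -
  obtain j where j: "j \<in> I" "a j \<noteq> 0"
    using assms(2) sum.neutral[of I "\<lambda>i. \<bar>a i\<bar>"] by fastforce
  have split: "(\<Sum>i\<in>I. \<bar>a i\<bar>) = \<bar>a j\<bar> + (\<Sum>i\<in>I-{j}. \<bar>a i\<bar>)"
    using assms(1) j(1) by (simp add: sum.remove)
  have "(\<Sum>i\<in>I-{j}. \<bar>a i\<bar>) \<ge> 0" by (simp add: sum_nonneg)
  then have aj: "\<bar>a j\<bar> = 1" and rest: "(\<Sum>i\<in>I-{j}. \<bar>a i\<bar>) = 0"
    using split assms(2) j(2) by linarith+
  have "\<forall>i\<in>I-{j}. \<bar>a i\<bar> = 0"
    using rest sum_nonneg_eq_0_iff[of "I-{j}" "\<lambda>i. \<bar>a i\<bar>"] assms(1) by auto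
  then show ?thesis using aj j(1) by auto
qed

lemma l1_dist_eq_1_iff_grid_step:
  assumes "length x = length y"
  shows "(\<Sum>i<length x. \<bar>int (x ! i) - int (y ! i)\<bar>) = 1 \<longleftrightarrow> (\<exists>j. grid_step x y j)"
proof
  assume "(\<Sum>i<length x. \<bar>int (x ! i) - int (y ! i)\<bar>) = 1"
  then obtain j where "j < length x" "\<bar>int (x ! j) - int (y ! j)\<bar> = 1"
    "\<forall>i<length x. i \<noteq> j \<longrightarrow> int (x ! i) - int (y ! i) = 0"
    using sum_abs_eq_1_imp_single[of "{..<length x}" "\<lambda>i. int (x ! i) - int (y ! i)"] by auto
  then have "grid_step x y j" unfolding grid_step_def using assms by auto
  then show "\<exists>j. grid_step x y j" ..
next
  assume "\<exists>j. grid_step x y j"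
  then obtain j where step: "grid_step x y j" ..
  then have "j < length x" by (rule grid_step_dir_less)
  with step have "(\<Sum>i<length x. \<bar>int (x ! i) - int (y ! i)\<bar>) = \<bar>int (x ! j) - int (y ! j)\<bar>"
    by (subst sum.remove[of _ j]) (auto simp: grid_step_def intro!: sum.neutral)
  also have "\<dots> = 1" using step by (auto simp: grid_step_def)
  finally show "(\<Sum>i<length x. \<bar>int (x ! i) - int (y ! i)\<bar>) = 1" .
qed

lemma grid_edge_iff_grid_step:
  assumes "x \<in> grid_vertices ns" "y \<in> grid_vertices ns"
  shows "{x, y} \<in> grid_edges ns \<longleftrightarrow> (\<exists>j. grid_step x y j)"
proof -
  have len: "length x = length ns" "length y = length ns"
    using assms by (simp_all add: grid_vertex_length)
  have "{x, y} \<in> grid_edges ns \<longleftrightarrow> (\<Sum>i<length ns. \<bar>int (x ! i) - int (y ! i)\<bar>) = 1"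
    unfolding grid_edges_def using assms
    by (auto simp: doubleton_eq_iff abs_minus_commute)
  with len show ?thesis using l1_dist_eq_1_iff_grid_step[of x y] by simp
qed

lemma grid_edgeE:
  assumes "e \<in> grid_edges ns"
  obtains x y where "e = {x, y}" "x \<in> grid_vertices ns" "y \<in> grid_vertices ns"
  using assms by (auto simp: grid_edges_def)

definition edge_index :: "nat list \<Rightarrow> (nat \<times> nat list) set" where
  "edge_index ns = (SIGMA j:{..<length ns}. grid_vertices (ns[j := ns ! j - 1]))"

definition edge_at :: "nat \<Rightarrow> nat list \<Rightarrow> nat list set" where
  "edge_at j l = {l, l[j := Suc (l ! j)]}"

lemma grid_vertices_list_update_pred:
  assumes j: "j < length ns"
  shows "l \<in> grid_vertices (ns[j := ns ! j - 1]) \<longleftrightarrow> l \<in> grid_vertices ns \<and> l ! j < ns ! j"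
proof
  assume l: "l \<in> grid_vertices (ns[j := ns ! j - 1])"
  then have b: "\<And>i. i < length ns \<Longrightarrow> 1 \<le> l ! i \<and> l ! i \<le> ns[j := ns ! j - 1] ! i"
    by (simp add: grid_vertices_def)
  have "1 \<le> l ! i \<and> l ! i \<le> ns ! i" if "i < length ns" for i
    using b[OF that] that by (cases "i = j") auto
  moreover have "l ! j < ns ! j" using b[OF j] j by auto
  ultimately show "l \<in> grid_vertices ns \<and> l ! j < ns ! j" using l by (simp add: grid_vertices_def)
next
  assume l: "l \<in> grid_vertices ns \<and> l ! j < ns ! j"
  then have b: "\<And>i. i < length ns \<Longrightarrow> 1 \<le> l ! i \<and> l ! i \<le> ns ! i" by (simp add: grid_vertices_def)
  have "1 \<le> l ! i \<and> l ! i \<le> ns[j := ns ! j - 1] ! i" if "i < length ns" for i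
    using b[OF that] that l by (cases "i = j") auto
  then show "l \<in> grid_vertices (ns[j := ns ! j - 1])" using l by (simp add: grid_vertices_def)
qed

lemma mem_edge_index_iff:
  "(j, l) \<in> edge_index ns \<longleftrightarrow> j < length ns \<and> l \<in> grid_vertices ns \<and> l ! j < ns ! j"
  unfolding edge_index_def using grid_vertices_list_update_pred by auto

lemma finite_edge_index: "finite (edge_index ns)"
  unfolding edge_index_def by auto

lemma card_edge_index: "card (edge_index ns) = (\<Sum>j<length ns. prod_list (ns[j := ns ! j - 1]))"
  unfolding edge_index_def by (simp add: card_grid_vertices)

lemma edge_at_in_grid_edges:
  assumes "(j, l) \<in> edge_index ns"
  shows "edge_at j l \<in> grid_edges ns"
proof -
  have a: "j < length ns" "l \<in> grid_vertices ns" "l ! j < ns ! j" using assms mem_edge_index_iff by blast+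
  have len: "length l = length ns" using a grid_vertex_length by blast
  have "l[j := Suc (l ! j)] \<in> grid_vertices ns"
    using a len unfolding grid_vertices_def by (auto simp: nth_list_update)
  then show ?thesis unfolding edge_at_def using grid_edge_iff_grid_step a grid_step_list_update len by metis
qed

lemma grid_edge_eq_edge_at:
  assumes "e \<in> grid_edges ns"
  shows "\<exists>p\<in>edge_index ns. e = (\<lambda>(j, l). edge_at j l) p"
proof -
  obtain x y where e: "e = {x, y}" "x \<in> grid_vertices ns" "y \<in> grid_vertices ns"
    using assms grid_edgeE by blast
  then obtain j where step: "grid_step x y j" using grid_edge_iff_grid_step assms by blast
  have j: "j < length ns" using grid_step_dir_less[OF step] grid_vertex_length e(2) by simp
  show ?thesis
  proof (cases "y ! j = Suc (x ! j)")
    case True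
    then have "(j, x) \<in> edge_index ns"
      using grid_vertex_bounds[OF e(3) j] mem_edge_index_iff e j by simp
    then show ?thesis using e grid_step_eq_list_update[OF step True] unfolding edge_at_def by auto
  next
    case False
    then have F: "x ! j = Suc (y ! j)" using grid_step_nth_dir[OF step] by simp
    then have "(j, y) \<in> edge_index ns"
      using grid_vertex_bounds[OF e(2) j] mem_edge_index_iff e j by simp
    then show ?thesis
      using e grid_step_eq_list_update[OF grid_step_sym[OF step] F] unfolding edge_at_def by auto
  qed
qed

lemma inj_on_edge_at: "inj_on (\<lambda>(j, l). edge_at j l) (edge_index ns)"
proof (rule inj_onI, clarify)
  fix j l k m
  assume jl: "(j, l) \<in> edge_index ns" and km: "(k, m) \<in> edge_index ns" and e: "edge_at j l = edge_at k m"
  have jn: "j < length l" "k < length m" "length l = length m"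
    using jl km mem_edge_index_iff grid_vertex_length by metis+
  let ?l' = "l[j := Suc (l ! j)]" and ?m' = "m[k := Suc (m ! k)]"
  have "(l = m \<and> ?l' = ?m') \<or> (l = ?m' \<and> ?l' = m)"
    using e unfolding edge_at_def by (auto simp: doubleton_eq_iff)
  then show "j = k \<and> l = m"
  proof
    assume 1: "l = m \<and> ?l' = ?m'"
    have "j = k"
    proof (rule ccontr)
      assume "j \<noteq> k"
      then have "?m' ! j = m ! j" by simp
      moreover have "?l' ! j = Suc (l ! j)" using jn by simp
      moreover have "?l' ! j = ?m' ! j" using 1 by (metis (no_types))
      ultimately show False using 1 by simp
    qed
    then show ?thesis using 1 by simp
  next
    assume 2: "l = ?m' \<and> ?l' = m"
    then have "l ! k = Suc (m ! k)" using jn by simp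
    moreover have "m ! k = ?l' ! k" using 2 by (metis (no_types))
    moreover have "?l' ! k \<ge> l ! k" using jn by (cases "j = k") (auto simp: nth_list_update)
    ultimately show ?thesis by simp
  qed
qed

lemma bij_betw_edge_at: "bij_betw (\<lambda>(j, l). edge_at j l) (edge_index ns) (grid_edges ns)"
  unfolding bij_betw_def using inj_on_edge_at edge_at_in_grid_edges grid_edge_eq_edge_at by fastforce

section \<open>The cube and squares in the grid\<close>

definition cube_flip :: "nat \<Rightarrow> nat list \<Rightarrow> nat list" where
  "cube_flip i u = u[i := 3 - u ! i]"

lemma cube_vertices_iff: "u \<in> cube_vertices d \<longleftrightarrow> length u = d \<and> (\<forall>i<d. u ! i = 1 \<or> u ! i = 2)"
proof -
  have "(Suc 0 \<le> a \<and> a \<le> 2) \<longleftrightarrow> (a = 1 \<or> a = 2)" for a :: nat by arith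
  then show ?thesis unfolding cube_vertices_def grid_vertices_def by simp
qed

lemma card_cube_vertices: "card (cube_vertices d) = 2 ^ d"
  by (simp add: cube_vertices_def card_grid_vertices prod_list_replicate)

lemma cube_flip_in: "u \<in> cube_vertices d \<Longrightarrow> i < d \<Longrightarrow> cube_flip i u \<in> cube_vertices d"
  by (auto simp: cube_vertices_iff cube_flip_def nth_list_update)

lemma cube_flip_nth: "u \<in> cube_vertices d \<Longrightarrow> i < d \<Longrightarrow> cube_flip i u ! i \<noteq> u ! i"
  by (auto simp: cube_vertices_iff cube_flip_def)

lemma cube_flip_nth_other: "j \<noteq> i \<Longrightarrow> cube_flip i u ! j = u ! j"
  by (simp add: cube_flip_def)

lemma cube_flip_commute: "i \<noteq> k \<Longrightarrow> cube_flip i (cube_flip k u) = cube_flip k (cube_flip i u)"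
  by (simp add: cube_flip_def list_update_swap)

lemma cube_flip_inj_dir:
  assumes "u \<in> cube_vertices d" "i < d" "cube_flip i u = cube_flip k u"
  shows "i = k"
proof (rule ccontr)
  assume "i \<noteq> k"
  then have "cube_flip k u ! i = u ! i" by (simp add: cube_flip_nth_other)
  then show False using assms cube_flip_nth[OF assms(1,2)] by simp
qed

lemma cube_flip_flip_neq:
  assumes "u \<in> cube_vertices d" "i < d" "i \<noteq> k"
  shows "cube_flip i (cube_flip k u) \<noteq> u"
proof -
  have "i < length u" "u ! i = 1 \<or> u ! i = 2" using assms(1,2) by (auto simp: cube_vertices_iff)
  then have "cube_flip i (cube_flip k u) ! i \<noteq> u ! i"
    using assms(3) by (auto simp: cube_flip_def nth_list_update)
  then show ?thesis by metis
qed

lemma cube_edge_iff_flip: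
  assumes "u \<in> cube_vertices d" "v \<in> cube_vertices d"
  shows "{u, v} \<in> cube_edges d \<longleftrightarrow> (\<exists>i<d. v = cube_flip i u)"
proof -
  have len: "length u = d" "length v = d" using assms by (auto simp: cube_vertices_iff)
  have "grid_step u v j \<longleftrightarrow> j < d \<and> v = cube_flip j u" for j
  proof
    assume step: "grid_step u v j"
    then have j: "j < d" using len grid_step_dir_less by metis
    have "u ! j = 1 \<or> u ! j = 2" "v ! j = 1 \<or> v ! j = 2" using assms j by (auto simp: cube_vertices_iff)
    then have "v = cube_flip j u"
      using step len by (intro nth_equalityI) (auto simp: grid_step_def cube_flip_def nth_list_update)
    with j show "j < d \<and> v = cube_flip j u" ..
  qed (use assms in \<open>auto simp: grid_step_def cube_flip_def cube_vertices_iff\<close>)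
  then show ?thesis
    using grid_edge_iff_grid_step assms unfolding cube_edges_def cube_vertices_def by blast
qed

lemma grid_square_same_dir:
  assumes xy: "grid_step x y j" and xz: "grid_step x z j" and "y \<noteq> z"
    and yw: "grid_step y w a" and zw: "grid_step z w b"
  shows "w = x"
proof -
  have L: "length y = length x" "length z = length x" "length w = length x" "j < length x"
    "a < length x" "b < length x"
    using grid_step_length[OF xy] grid_step_length[OF xz] grid_step_length[OF yw]
      grid_step_dir_less[OF xy] grid_step_dir_less[OF yw] grid_step_dir_less[OF zw] by auto
  note other = grid_step_nth_other
  have yz: "y ! j \<noteq> z ! j"
  proof
    assume e: "y ! j = z ! j"
    have "y = z"
    proof (rule nth_equalityI)
      fix i assume "i < length y"
      then show "y ! i = z ! i" using e other[OF xy, of i] other[OF xz, of i] L by (cases "i = j") auto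
    qed (use L in simp)
    with \<open>y \<noteq> z\<close> show False ..
  qed
  have aj: "a = j"
  proof (rule ccontr)
    assume na: "a \<noteq> j"
    then have "w ! j = y ! j" using other[OF yw, of j] L by auto
    then have "b = j" using other[OF zw, of j] L yz by auto
    then have "w ! a = z ! a" using other[OF zw, of a] L na by auto
    moreover have "z ! a = x ! a" "y ! a = x ! a" using other[OF xz, of a] other[OF xy, of a] L na by auto
    ultimately show False using grid_step_nth_dir_neq[OF yw] by simp
  qed
  have bj: "b = j"
  proof (rule ccontr)
    assume nb: "b \<noteq> j"
    then have "w ! b = y ! b" using other[OF yw, of b] L aj by auto
    moreover have "z ! b = x ! b" "y ! b = x ! b" using other[OF xz, of b] other[OF xy, of b] L nb by auto
    ultimately show False using grid_step_nth_dir_neq[OF zw] by simp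
  qed
  have "y ! j = Suc (x ! j) \<or> x ! j = Suc (y ! j)" "z ! j = Suc (x ! j) \<or> x ! j = Suc (z ! j)"
    "w ! j = Suc (y ! j) \<or> y ! j = Suc (w ! j)" "w ! j = Suc (z ! j) \<or> z ! j = Suc (w ! j)"
    using grid_step_nth_dir[OF xy] grid_step_nth_dir[OF xz] grid_step_nth_dir[OF yw]
      grid_step_nth_dir[OF zw] aj bj by auto
  then have "w ! j = x ! j" using yz by (elim disjE) linarith+
  show ?thesis
  proof (rule nth_equalityI)
    fix i assume "i < length w"
    then show "w ! i = x ! i"
      using \<open>w ! j = x ! j\<close> other[OF yw, of i] other[OF xy, of i] L aj by (cases "i = j") auto
  qed (use L in simp)
qed

lemma grid_square_diff_dir:
  assumes xy: "grid_step x y j" and xz: "grid_step x z k" and jk: "j \<noteq> k"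
    and yw: "grid_step y w a" and zw: "grid_step z w b" and "w \<noteq> x"
  shows "grid_step y w k \<and> grid_step z w j"
proof -
  have L: "length y = length x" "length z = length x" "length w = length x" "j < length x"
    "a < length x" "b < length x" "k < length x"
    using grid_step_length[OF xy] grid_step_length[OF xz] grid_step_length[OF yw]
      grid_step_dir_less[OF xy] grid_step_dir_less[OF yw] grid_step_dir_less[OF zw]
      grid_step_dir_less[OF xz] by auto
  note other = grid_step_nth_other
  have "y ! j \<noteq> z ! j" using grid_step_nth_dir_neq[OF xy] other[OF xz, of j] L jk by auto
  then have abj: "a = j \<or> b = j" using other[OF yw, of j] other[OF zw, of j] L by force
  have "y ! k \<noteq> z ! k" using grid_step_nth_dir_neq[OF xz] other[OF xy, of k] L jk by auto
  then have abk: "a = k \<or> b = k" using other[OF yw, of k] other[OF zw, of k] L by force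
  have "a = k \<and> b = j"
  proof (rule ccontr)
    assume "\<not> (a = k \<and> b = j)"
    then have "a = j" "b = k" using abj abk jk by auto
    have "w = x"
    proof (rule nth_equalityI)
      fix i assume "i < length w"
      then show "w ! i = x ! i"
        using \<open>a = j\<close> \<open>b = k\<close> other[OF yw, of i] other[OF xy, of i] other[OF zw, of i]
          other[OF xz, of i] L jk by (cases "i = j"; cases "i = k") auto
    qed (use L in simp)
    with \<open>w \<noteq> x\<close> show False ..
  qed
  then show ?thesis using yw zw by simp
qed

section \<open>Copies of the cube are axis-parallel\<close>

locale grid_cube =
  fixes ns :: "nat list" and V :: "nat list set" and E :: "nat list set set"
    and \<tau> :: "nat \<Rightarrow> nat list \<Rightarrow> nat list"
  assumes finite_V: "finite V"
    and V_sub: "V \<subseteq> grid_vertices ns"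
    and E_sub: "E \<subseteq> grid_edges ns"
    and edge_sub: "\<And>e. e \<in> E \<Longrightarrow> e \<subseteq> V"
    and tau_in: "\<And>j x. j < length ns \<Longrightarrow> x \<in> V \<Longrightarrow> \<tau> j x \<in> V"
    and tau_step: "\<And>j x. j < length ns \<Longrightarrow> x \<in> V \<Longrightarrow> grid_step x (\<tau> j x) j"
    and tau_tau: "\<And>j x. j < length ns \<Longrightarrow> x \<in> V \<Longrightarrow> \<tau> j (\<tau> j x) = x"
    and tau_edge: "\<And>j x. j < length ns \<Longrightarrow> x \<in> V \<Longrightarrow> {x, \<tau> j x} \<in> E"
    and edge_at_vertex: "\<And>x e. x \<in> V \<Longrightarrow> e \<in> E \<Longrightarrow> x \<in> e \<Longrightarrow> \<exists>j<length ns. e = {x, \<tau> j x}"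
    and tau_commute: "\<And>j k x. j < length ns \<Longrightarrow> k < length ns \<Longrightarrow> j \<noteq> k \<Longrightarrow> x \<in> V \<Longrightarrow>
      \<tau> j (\<tau> k x) = \<tau> k (\<tau> j x)"

locale cube_copy =
  fixes ns :: "nat list" and V :: "nat list set" and E :: "nat list set set"
    and \<phi> :: "nat list \<Rightarrow> nat list"
  assumes V_sub: "V \<subseteq> grid_vertices ns"
    and E_sub: "E \<subseteq> grid_edges ns"
    and edge_sub: "\<And>e. e \<in> E \<Longrightarrow> e \<subseteq> V"
    and bij: "bij_betw \<phi> (cube_vertices (length ns)) V"
    and cube_edge_iff: "\<And>u v. u \<in> cube_vertices (length ns) \<Longrightarrow> v \<in> cube_vertices (length ns) \<Longrightarrow>
      {u, v} \<in> cube_edges (length ns) \<longleftrightarrow> {\<phi> u, \<phi> v} \<in> E"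
begin

lemma finite_V: "finite V"
  using bij_betw_finite[OF bij] by (simp add: cube_vertices_def)

lemma card_V: "card V = 2 ^ length ns"
  using bij bij_betw_same_card card_cube_vertices by metis

lemma inv_into_in: "x \<in> V \<Longrightarrow> inv_into (cube_vertices (length ns)) \<phi> x \<in> cube_vertices (length ns)"
  using bij by (metis bij_betw_def inv_into_into)

lemma phi_inv_into: "x \<in> V \<Longrightarrow> \<phi> (inv_into (cube_vertices (length ns)) \<phi> x) = x"
  using bij by (metis bij_betw_inv_into_right)

lemma edge_imp_grid_step: "{x, y} \<in> E \<Longrightarrow> \<exists>j. grid_step x y j"
  using grid_edge_iff_grid_step E_sub edge_sub V_sub by blast

definition nbr :: "nat list \<Rightarrow> nat \<Rightarrow> nat list" where
  "nbr x i = \<phi> (cube_flip i (inv_into (cube_vertices (length ns)) \<phi> x))"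

lemma nbr_edge:
  assumes x: "x \<in> V" and i: "i < length ns"
  shows "{x, nbr x i} \<in> E"
proof -
  let ?u = "inv_into (cube_vertices (length ns)) \<phi> x"
  have u: "?u \<in> cube_vertices (length ns)" using inv_into_in x .
  then have "{?u, cube_flip i ?u} \<in> cube_edges (length ns)"
    using cube_edge_iff_flip cube_flip_in i by blast
  then have "{\<phi> ?u, nbr x i} \<in> E"
    using cube_edge_iff u cube_flip_in i unfolding nbr_def by blast
  then show ?thesis using phi_inv_into x by simp
qed

lemma edge_imp_nbr:
  assumes x: "x \<in> V" and e: "{x, y} \<in> E"
  shows "\<exists>i<length ns. y = nbr x i"
proof -
  let ?u = "inv_into (cube_vertices (length ns)) \<phi> x" and ?v = "inv_into (cube_vertices (length ns)) \<phi> y"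
  have y: "y \<in> V" using e edge_sub by blast
  then have "{\<phi> ?u, \<phi> ?v} \<in> E" using e x phi_inv_into by simp
  then have "{?u, ?v} \<in> cube_edges (length ns)" using cube_edge_iff inv_into_in x y by blast
  then obtain i where "i < length ns" "?v = cube_flip i ?u"
    using cube_edge_iff_flip inv_into_in x y by blast
  then show ?thesis unfolding nbr_def using phi_inv_into[OF y] by auto
qed

lemma nbr_inj:
  assumes x: "x \<in> V" and i: "i < length ns" "i' < length ns" and eq: "nbr x i = nbr x i'"
  shows "i = i'"
proof -
  let ?u = "inv_into (cube_vertices (length ns)) \<phi> x"
  have u: "?u \<in> cube_vertices (length ns)" using inv_into_in x .
  have "inj_on \<phi> (cube_vertices (length ns))" using bij by (simp add: bij_betw_def)
  then have "cube_flip i ?u = cube_flip i' ?u"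
    using eq cube_flip_in[OF u] i unfolding nbr_def inj_on_def by blast
  then show ?thesis using cube_flip_inj_dir[OF u i(1)] by blast
qed

lemma nbr_square:
  assumes x: "x \<in> V" and i: "i < length ns" "i' < length ns" "i \<noteq> i'"
  shows "\<exists>w. {nbr x i, w} \<in> E \<and> {nbr x i', w} \<in> E \<and> w \<noteq> x"
proof -
  let ?C = "cube_vertices (length ns)"
  let ?u = "inv_into ?C \<phi> x"
  let ?w = "cube_flip i (cube_flip i' ?u)"
  have u: "?u \<in> ?C" using inv_into_in x .
  have ui: "cube_flip i ?u \<in> ?C" and ui': "cube_flip i' ?u \<in> ?C" and w: "?w \<in> ?C"
    using cube_flip_in u i by auto
  have w': "?w = cube_flip i' (cube_flip i ?u)" using cube_flip_commute[OF i(3)] .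
  have "{cube_flip i ?u, ?w} \<in> cube_edges (length ns)"
    unfolding w' using cube_edge_iff_flip[OF ui] cube_flip_in[OF ui i(2)] i(2) by blast
  then have 1: "{nbr x i, \<phi> ?w} \<in> E" using cube_edge_iff[OF ui w] unfolding nbr_def by blast
  have "{cube_flip i' ?u, ?w} \<in> cube_edges (length ns)"
    using cube_edge_iff_flip[OF ui' w] i(1) by blast
  then have 2: "{nbr x i', \<phi> ?w} \<in> E" using cube_edge_iff[OF ui' w] unfolding nbr_def by blast
  have "inj_on \<phi> ?C" using bij by (simp add: bij_betw_def)
  then have "\<phi> ?w \<noteq> \<phi> ?u" using w u cube_flip_flip_neq[OF u i(1,3)] by (simp add: inj_on_eq_iff)
  then have "\<phi> ?w \<noteq> x" using phi_inv_into[OF x] by simp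
  with 1 2 show ?thesis by blast
qed

definition nbr_dir :: "nat list \<Rightarrow> nat \<Rightarrow> nat" where
  "nbr_dir x i = (SOME j. grid_step x (nbr x i) j)"

lemma grid_step_nbr_dir:
  assumes "x \<in> V" "i < length ns"
  shows "grid_step x (nbr x i) (nbr_dir x i)"
proof -
  obtain j where "grid_step x (nbr x i) j" using edge_imp_grid_step nbr_edge[OF assms] by blast
  then show ?thesis unfolding nbr_dir_def by (rule someI)
qed

lemma grid_step_dir_less_length:
  assumes "x \<in> V" "grid_step x y j"
  shows "j < length ns"
proof -
  have "length x = length ns" using assms(1) V_sub grid_vertex_length by blast
  then show ?thesis using grid_step_dir_less[OF assms(2)] by simp
qed

lemma nbr_dir_less: "x \<in> V \<Longrightarrow> i < length ns \<Longrightarrow> nbr_dir x i < length ns"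
  using grid_step_nbr_dir grid_step_dir_less_length by blast

lemma nbr_dir_inj:
  assumes x: "x \<in> V" and i: "i < length ns" "i' < length ns" and eq: "nbr_dir x i = nbr_dir x i'"
  shows "i = i'"
proof (rule ccontr)
  assume ne: "i \<noteq> i'"
  obtain w where w: "{nbr x i, w} \<in> E" "{nbr x i', w} \<in> E" "w \<noteq> x"
    using nbr_square[OF x i ne] by blast
  obtain a b where a: "grid_step (nbr x i) w a" and b: "grid_step (nbr x i') w b"
    using edge_imp_grid_step w by blast
  have "grid_step x (nbr x i') (nbr_dir x i)" using grid_step_nbr_dir[OF x i(2)] eq by simp
  moreover have "nbr x i \<noteq> nbr x i'" using nbr_inj x i ne by blast
  ultimately have "w = x" using grid_square_same_dir[OF grid_step_nbr_dir[OF x i(1)] _ _ a b] by blast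
  with w show False by simp
qed

lemma nbr_dir_surj:
  assumes x: "x \<in> V" and j: "j < length ns"
  shows "\<exists>i<length ns. nbr_dir x i = j"
proof -
  have "inj_on (nbr_dir x) {..<length ns}" using nbr_dir_inj x by (auto simp: inj_on_def)
  moreover have "nbr_dir x ` {..<length ns} \<subseteq> {..<length ns}" using nbr_dir_less x by auto
  ultimately have "nbr_dir x ` {..<length ns} = {..<length ns}"
    by (simp add: card_image card_subset_eq)
  with j show ?thesis by (metis imageE lessThan_iff)
qed

lemma edge_dir_unique:
  assumes x: "x \<in> V" and e: "{x, y} \<in> E" "{x, y'} \<in> E" and s: "grid_step x y j" "grid_step x y' j"
  shows "y = y'"
proof -
  obtain i where i: "i < length ns" "y = nbr x i" using edge_imp_nbr x e(1) by blast
  obtain i' where i': "i' < length ns" "y' = nbr x i'" using edge_imp_nbr x e(2) by blast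
  have "nbr_dir x i = nbr_dir x i'"
    using grid_step_dir_unique grid_step_nbr_dir x i i' s by metis
  then show ?thesis using nbr_dir_inj x i i' by metis
qed

definition move :: "nat \<Rightarrow> nat list \<Rightarrow> nat list" where
  "move j x = (SOME y. {x, y} \<in> E \<and> grid_step x y j)"

lemma move_edge_step:
  assumes x: "x \<in> V" and j: "j < length ns"
  shows "{x, move j x} \<in> E \<and> grid_step x (move j x) j"
proof -
  obtain i where "i < length ns" "nbr_dir x i = j" using nbr_dir_surj x j by blast
  then have "{x, nbr x i} \<in> E \<and> grid_step x (nbr x i) j" using nbr_edge grid_step_nbr_dir x by metis
  then show ?thesis unfolding move_def by (rule someI)
qed

lemma move_in: "x \<in> V \<Longrightarrow> j < length ns \<Longrightarrow> move j x \<in> V"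
  using move_edge_step edge_sub by blast

lemma move_move:
  assumes x: "x \<in> V" and j: "j < length ns"
  shows "move j (move j x) = x"
proof -
  have y: "move j x \<in> V" using move_in x j .
  have "{move j x, x} \<in> E" "grid_step (move j x) x j"
    using move_edge_step[OF x j] grid_step_sym by (auto simp: insert_commute)
  then show ?thesis using edge_dir_unique[OF y] move_edge_step[OF y j] by blast
qed

lemma edge_at_vertex:
  assumes x: "x \<in> V" and e: "e \<in> E" "x \<in> e"
  shows "\<exists>j<length ns. e = {x, move j x}"
proof -
  have "e \<in> grid_edges ns" using e E_sub by blast
  then obtain a b where "e = {a, b}" by (rule grid_edgeE)
  then obtain y where ey: "e = {x, y}" using e by auto
  then obtain j where s: "grid_step x y j" using edge_imp_grid_step e by blast
  have j: "j < length ns" using grid_step_dir_less_length x s by blast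
  then have "y = move j x" using edge_dir_unique x e ey s move_edge_step by blast
  then show ?thesis using ey j by blast
qed

lemma move_commute:
  assumes j: "j < length ns" and k: "k < length ns" and jk: "j \<noteq> k" and x: "x \<in> V"
  shows "move j (move k x) = move k (move j x)"
proof -
  note sj = move_edge_step[OF x j] and sk = move_edge_step[OF x k]
  obtain i where i: "i < length ns" "move j x = nbr x i" using edge_imp_nbr x sj by blast
  obtain i' where i': "i' < length ns" "move k x = nbr x i'" using edge_imp_nbr x sk by blast
  have "i \<noteq> i'"
  proof
    assume "i = i'"
    then have "grid_step x (move j x) k" using i i' sk by simp
    then show False using sj grid_step_dir_unique jk by blast
  qed
  then obtain w where w: "{move j x, w} \<in> E" "{move k x, w} \<in> E" "w \<noteq> x"
    using nbr_square[OF x i(1) i'(1)] i(2) i'(2) by auto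
  obtain a b where a: "grid_step (move j x) w a" and b: "grid_step (move k x) w b"
    using edge_imp_grid_step w by blast
  have jw: "grid_step (move j x) w k" and kw: "grid_step (move k x) w j"
    using grid_square_diff_dir[OF conjunct2[OF sj] conjunct2[OF sk] jk a b w(3)] by auto
  have yj: "move j x \<in> V" and yk: "move k x \<in> V" using move_in x j k by auto
  have "w = move k (move j x)"
    by (rule edge_dir_unique[OF yj w(1) _ jw]) (use move_edge_step[OF yj k] in auto)
  moreover have "w = move j (move k x)"
    by (rule edge_dir_unique[OF yk w(2) _ kw]) (use move_edge_step[OF yk j] in auto)
  ultimately show ?thesis by simp
qed

lemma grid_cube: "grid_cube ns V E move"
proof
  show "finite V" by (fact finite_V)
  show "V \<subseteq> grid_vertices ns" by (fact V_sub)
  show "E \<subseteq> grid_edges ns" by (fact E_sub)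
  show "e \<subseteq> V" if "e \<in> E" for e using edge_sub that .
  fix j k x assume j: "j < length ns" and x: "x \<in> V"
  show "move j x \<in> V" using move_in x j .
  show "grid_step x (move j x) j" "{x, move j x} \<in> E" using move_edge_step x j by blast+
  show "move j (move j x) = x" using move_move x j .
  show "move j (move k x) = move k (move j x)" if "k < length ns" "j \<noteq> k"
    using move_commute j that x by blast
next
  show "\<exists>j<length ns. e = {x, move j x}" if "x \<in> V" "e \<in> E" "x \<in> e" for x e
    using edge_at_vertex that .
qed

end

lemma iso_subgraph_imp_grid_cube:
  assumes "iso_subgraph (grid_vertices ns) (grid_edges ns) (cube_vertices d) (cube_edges d) V E"
    and "length ns = d"
  shows "\<exists>\<tau>. grid_cube ns V E \<tau> \<and> card V = 2 ^ d"
proof -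
  from assms(1) obtain \<phi> where "bij_betw \<phi> (cube_vertices d) V"
    "\<forall>u\<in>cube_vertices d. \<forall>v\<in>cube_vertices d. {u, v} \<in> cube_edges d \<longleftrightarrow> {\<phi> u, \<phi> v} \<in> E"
    unfolding iso_subgraph_def by blast
  with assms have "cube_copy ns V E \<phi>" unfolding iso_subgraph_def cube_copy_def by blast
  then show ?thesis using cube_copy.grid_cube cube_copy.card_V assms(2) by blast
qed

context grid_cube
begin

lemma V_bounds: "x \<in> V \<Longrightarrow> i < length ns \<Longrightarrow> 1 \<le> x ! i \<and> x ! i \<le> ns ! i"
  using grid_vertex_bounds V_sub by blast

lemma V_length: "x \<in> V \<Longrightarrow> length x = length ns"
  using grid_vertex_length V_sub by blast

lemma tau_nth_other: "j < length ns \<Longrightarrow> x \<in> V \<Longrightarrow> i < length ns \<Longrightarrow> i \<noteq> j \<Longrightarrow> \<tau> j x ! i = x ! i"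
  using grid_step_nth_other[OF tau_step] V_length by simp

lemma tau_nth_dir: "j < length ns \<Longrightarrow> x \<in> V \<Longrightarrow> \<tau> j x ! j = Suc (x ! j) \<or> x ! j = Suc (\<tau> j x ! j)"
  by (rule grid_step_nth_dir[OF tau_step])

definition lower_end :: "nat \<Rightarrow> nat list \<Rightarrow> nat list" where
  "lower_end j x = (if x ! j \<le> \<tau> j x ! j then x else \<tau> j x)"

lemma lower_end_nth_other:
  "j < length ns \<Longrightarrow> x \<in> V \<Longrightarrow> i < length ns \<Longrightarrow> i \<noteq> j \<Longrightarrow> lower_end j x ! i = x ! i"
  using tau_nth_other unfolding lower_end_def by simp

lemma lower_end_nth_dir: "lower_end j x ! j = min (x ! j) (\<tau> j x ! j)"
  unfolding lower_end_def by simp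

lemma length_lower_end: "j < length ns \<Longrightarrow> x \<in> V \<Longrightarrow> length (lower_end j x) = length ns"
  using V_length tau_in unfolding lower_end_def by simp

lemma lower_end_edge_at:
  assumes j: "j < length ns" and x: "x \<in> V"
  shows "(j, lower_end j x) \<in> edge_index ns \<and> {x, \<tau> j x} = edge_at j (lower_end j x)"
proof -
  note step = tau_step[OF j x]
  have y: "\<tau> j x \<in> V" using tau_in j x .
  show ?thesis
  proof (cases "x ! j \<le> \<tau> j x ! j")
    case True
    then have s: "\<tau> j x ! j = Suc (x ! j)" using grid_step_nth_dir[OF step] by auto
    have "x ! j < ns ! j" using s grid_vertex_bounds[of "\<tau> j x" ns j] y V_sub j by auto
    then have "(j, x) \<in> edge_index ns" using mem_edge_index_iff V_sub x j by blast
    then show ?thesis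
      using True grid_step_eq_list_update[OF step s] unfolding lower_end_def edge_at_def by simp
  next
    case False
    then have s: "x ! j = Suc (\<tau> j x ! j)" using grid_step_nth_dir[OF step] by auto
    have "\<tau> j x ! j < ns ! j" using s grid_vertex_bounds[of x ns j] x V_sub j by auto
    then have "(j, \<tau> j x) \<in> edge_index ns" using mem_edge_index_iff V_sub y j by blast
    then show ?thesis
      using False grid_step_eq_list_update[OF grid_step_sym[OF step] s]
      unfolding lower_end_def edge_at_def by (simp add: insert_commute)
  qed
qed

lemma finite_E: "finite E"
  using finite_subset[OF E_sub] bij_betw_finite[OF bij_betw_edge_at] finite_edge_index by blast

lemma card_edge: "e \<in> E \<Longrightarrow> card e = 2"
  using E_sub grid_edgeE grid_edge_iff_grid_step grid_step_neq by (metis card_2_iff subsetD)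

lemma double_sum_edges:
  fixes f :: "nat list set \<Rightarrow> nat"
  shows "2 * (\<Sum>e\<in>E. f e) = (\<Sum>x\<in>V. \<Sum>j<length ns. f {x, \<tau> j x})"
proof -
  have "(\<Sum>j<length ns. f {x, \<tau> j x}) = (\<Sum>e\<in>{e\<in>E. x \<in> e}. f e)" if x: "x \<in> V" for x
  proof (rule sum.reindex_bij_betw)
    show "bij_betw (\<lambda>j. {x, \<tau> j x}) {..<length ns} {e \<in> E. x \<in> e}"
      unfolding bij_betw_def
    proof
      show "inj_on (\<lambda>j. {x, \<tau> j x}) {..<length ns}"
      proof (rule inj_onI)
        fix j k assume j: "j \<in> {..<length ns}" and k: "k \<in> {..<length ns}" and e: "{x, \<tau> j x} = {x, \<tau> k x}"
        have "\<tau> j x \<noteq> x" "\<tau> k x \<noteq> x" using tau_step grid_step_neq x j k by (metis lessThan_iff)+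
        then have "\<tau> j x = \<tau> k x" using e by (auto simp: doubleton_eq_iff)
        then show "j = k" using tau_step[of j x] tau_step[of k x] grid_step_dir_unique x j k by auto
      qed
      show "(\<lambda>j. {x, \<tau> j x}) ` {..<length ns} = {e \<in> E. x \<in> e}"
        using tau_edge x edge_at_vertex by fastforce
    qed
  qed
  then have "(\<Sum>x\<in>V. \<Sum>j<length ns. f {x, \<tau> j x}) = (\<Sum>x\<in>V. \<Sum>e\<in>{e\<in>E. x \<in> e}. f e)"
    by (rule sum.cong[OF refl])
  also have "\<dots> = (\<Sum>e\<in>E. \<Sum>x\<in>{x\<in>V. x \<in> e}. f e)"
    using sum.swap_restrict[OF finite_V finite_E, of "\<lambda>x e. f e" "\<lambda>x e. x \<in> e"] by simp
  also have "\<dots> = (\<Sum>e\<in>E. 2 * f e)"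
  proof (rule sum.cong[OF refl])
    fix e assume e: "e \<in> E"
    then have "{x \<in> V. x \<in> e} = e" using edge_sub by blast
    then show "(\<Sum>x\<in>{x\<in>V. x \<in> e}. f e) = 2 * f e" using card_edge e by simp
  qed
  finally show ?thesis by (simp add: sum_distrib_left)
qed

end

section \<open>The vertex labeling\<close>

lemma double_sum_involution:
  fixes T :: "'a \<Rightarrow> nat"
  assumes "\<And>x. x \<in> A \<Longrightarrow> t x \<in> A" "\<And>x. x \<in> A \<Longrightarrow> t (t x) = x"
    and "\<And>x. x \<in> A \<Longrightarrow> T x + T (t x) = c"
  shows "2 * (\<Sum>x\<in>A. T x) = c * card A"
proof -
  have "(\<Sum>x\<in>A. T (t x)) = (\<Sum>x\<in>A. T x)"
    by (rule sum.reindex_bij_witness[where i = t and j = t]) (use assms in auto)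
  then have "2 * (\<Sum>x\<in>A. T x) = (\<Sum>x\<in>A. T x + T (t x))" by (simp add: sum.distrib)
  also have "\<dots> = (\<Sum>x\<in>A. c)" using assms(3) by (rule sum.cong[OF refl])
  finally show ?thesis by simp
qed

lemma mult_add_eq_imp_eq:
  fixes m :: nat
  assumes "s < m" "s' < m" "q * m + s = q' * m + s'"
  shows "q = q' \<and> s = s'"
proof -
  have "q = (q * m + s) div m" "s = (q * m + s) mod m" using assms(1) by simp_all
  moreover have "q' = (q' * m + s') div m" "s' = (q' * m + s') mod m" using assms(2) by simp_all
  ultimately show ?thesis using assms(3) by metis
qed

lemma inj_on_card_imp_bij_betw:
  assumes "finite B" "inj_on f A" "f ` A \<subseteq> B" "card A = card B"
  shows "bij_betw f A B"
  using assms by (simp add: bij_betw_def card_image card_subset_eq)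

fun mixed_radix_index :: "bool \<Rightarrow> nat list \<Rightarrow> nat list \<Rightarrow> nat" where
  "mixed_radix_index up (n # ns) (x # xs) = (if up then x - 1 else n - x) + n * mixed_radix_index up ns xs"
| "mixed_radix_index up _ _ = 0"

lemma mixed_radix_index_less: "xs \<in> grid_vertices ns \<Longrightarrow> mixed_radix_index up ns xs < prod_list ns"
proof (induction ns arbitrary: xs)
  case (Cons n ns)
  then obtain x xs' where xs: "xs = x # xs'" "1 \<le> x" "x \<le> n" "xs' \<in> grid_vertices ns"
    by (cases xs) auto
  have "mixed_radix_index up ns xs' + 1 \<le> prod_list ns" using Cons.IH xs(4) by fastforce
  then have "n * (mixed_radix_index up ns xs' + 1) \<le> n * prod_list ns" by (rule mult_le_mono2)
  moreover have "(if up then x - 1 else n - x) < n" using xs by auto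
  ultimately show ?case using xs by (simp add: algebra_simps)
qed simp

lemma mixed_radix_index_inj:
  "xs \<in> grid_vertices ns \<Longrightarrow> ys \<in> grid_vertices ns \<Longrightarrow>
   mixed_radix_index up ns xs = mixed_radix_index up ns ys \<Longrightarrow> xs = ys"
proof (induction ns arbitrary: xs ys)
  case (Cons n ns)
  then obtain x xs' y ys' where xy: "xs = x # xs'" "ys = y # ys'"
    by (cases xs; cases ys) auto
  with Cons.prems have x: "1 \<le> x" "x \<le> n" "1 \<le> y" "y \<le> n"
    and r: "xs' \<in> grid_vertices ns" "ys' \<in> grid_vertices ns" by auto
  have d: "(if up then x - 1 else n - x) < n" "(if up then y - 1 else n - y) < n" using x by auto
  have "mixed_radix_index up ns xs' * n + (if up then x - 1 else n - x) =
        mixed_radix_index up ns ys' * n + (if up then y - 1 else n - y)"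
    using Cons.prems xy by (simp add: algebra_simps)
  from mult_add_eq_imp_eq[OF d this]
  have "xs' = ys'" "x = y" using Cons.IH r x by (auto split: if_splits)
  then show ?case using xy by simp
qed simp

lemma mixed_radix_index_complement:
  "xs \<in> grid_vertices ns \<Longrightarrow> mixed_radix_index True ns xs + mixed_radix_index False ns xs = prod_list ns - 1"
proof (induction ns arbitrary: xs)
  case (Cons n ns)
  then obtain x xs' where xs: "xs = x # xs'" "1 \<le> x" "x \<le> n" "xs' \<in> grid_vertices ns"
    by (cases xs) auto
  have P: "prod_list ns \<ge> 1" using mixed_radix_index_less[OF xs(4), of True] by linarith
  have "mixed_radix_index True (n # ns) xs + mixed_radix_index False (n # ns) xs =
        (x - 1) + (n - x) + n * (mixed_radix_index True ns xs' + mixed_radix_index False ns xs')"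
    using xs by (simp add: algebra_simps)
  also have "\<dots> = (n - 1) + n * (prod_list ns - 1)" using Cons.IH xs by simp
  also have "\<dots> = n * prod_list ns - 1" using P xs by (simp add: algebra_simps diff_mult_distrib2)
  finally show ?case by simp
qed simp

text \<open>An enumeration \<open>plane_vertex_label_fst + plane_vertex_label_snd\<close> of the rectangle
  \<open>[n0] \<times> [n1]\<close> whose first summand is reflected (\<open>h \<mapsto> c - h\<close>) when \<open>a\<close> moves by one and
  whose second summand is reflected when \<open>b\<close> moves by one. The boustrophedon order used when
  \<open>n0\<close> or \<open>n1\<close> is odd is injective only thanks to the odd side; for two even sides the labels
  are built from \<open>(a - 1) div 2\<close>, \<open>(b - 1) div 2\<close> and the parities of \<open>a\<close> and \<open>b\<close> instead.\<close>
definition plane_vertex_label_fst :: "nat \<Rightarrow> nat \<Rightarrow> nat \<Rightarrow> nat \<Rightarrow> nat" where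
  "plane_vertex_label_fst n0 n1 a b =
     (if even n0 \<and> even n1 then (if odd a then (b - 1) div 2 else n1 - 1 - (b - 1) div 2)
      else n0 * (if even a then b - 1 else n1 - b))"

definition plane_vertex_label_snd :: "nat \<Rightarrow> nat \<Rightarrow> nat \<Rightarrow> nat \<Rightarrow> nat" where
  "plane_vertex_label_snd n0 n1 a b =
     (if even n0 \<and> even n1 then n1 * (if odd b then (a - 1) div 2 else n0 - 1 - (a - 1) div 2)
      else (if even b then a - 1 else n0 - a))"

definition plane_vertex_pair_fst :: "nat \<Rightarrow> nat \<Rightarrow> nat" where
  "plane_vertex_pair_fst n0 n1 = (if even n0 \<and> even n1 then n1 - 1 else n0 * (n1 - 1))"

definition plane_vertex_pair_snd :: "nat \<Rightarrow> nat \<Rightarrow> nat" where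
  "plane_vertex_pair_snd n0 n1 = (if even n0 \<and> even n1 then n1 * (n0 - 1) else n0 - 1)"

lemma plane_vertex_label_fst_pair:
  assumes "a' = Suc a \<or> a = Suc a'" "1 \<le> b" "b \<le> n1"
  shows "plane_vertex_label_fst n0 n1 a b + plane_vertex_label_fst n0 n1 a' b = plane_vertex_pair_fst n0 n1"
proof -
  have par: "odd a \<longleftrightarrow> even a'" using assms(1) by auto
  show ?thesis
  proof (cases "even n0 \<and> even n1")
    case True
    have "(b - 1) div 2 \<le> n1 - 1" using assms by linarith
    with True par show ?thesis unfolding plane_vertex_label_fst_def plane_vertex_pair_fst_def by auto
  next
    case False
    have "n0 * (b - 1) + n0 * (n1 - b) = n0 * (n1 - 1)" using assms
      by (simp add: add_mult_distrib2[symmetric])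
    with False par show ?thesis
      unfolding plane_vertex_label_fst_def plane_vertex_pair_fst_def by (auto simp: algebra_simps)
  qed
qed

lemma plane_vertex_label_snd_pair:
  assumes "b' = Suc b \<or> b = Suc b'" "1 \<le> a" "a \<le> n0"
  shows "plane_vertex_label_snd n0 n1 a b + plane_vertex_label_snd n0 n1 a b' = plane_vertex_pair_snd n0 n1"
proof -
  have par: "odd b \<longleftrightarrow> even b'" using assms(1) by auto
  have "(a - 1) div 2 + (n0 - 1 - (a - 1) div 2) = n0 - 1" using assms by linarith
  then have "n1 * ((a - 1) div 2) + n1 * (n0 - 1 - (a - 1) div 2) = n1 * (n0 - 1)"
    by (metis add_mult_distrib2)
  then show ?thesis
    using par assms unfolding plane_vertex_label_snd_def plane_vertex_pair_snd_def by (auto simp: algebra_simps)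
qed

lemma half_or_reflected_eq:
  assumes "even (n::nat)" "g < n div 2" "g' < n div 2"
    and "(if p then g else n - 1 - g) = (if p' then g' else n - 1 - g')"
  shows "(p \<longleftrightarrow> p') \<and> g = g'"
  using assms by (auto split: if_splits elim!: evenE)

lemma eq_if_div_2_eq_parity_eq:
  fixes a a' :: nat
  assumes "a div 2 = a' div 2" "even a \<longleftrightarrow> even a'"
  shows "a = a'"
  using assms by (metis div_mult_mod_eq even_iff_mod_2_eq_zero odd_iff_mod_2_eq_one)

lemma plane_vertex_label_less_inj:
  assumes a: "1 \<le> a" "a \<le> n0" "1 \<le> a'" "a' \<le> n0" and b: "1 \<le> b" "b \<le> n1" "1 \<le> b'" "b' \<le> n1"
  defines "F \<equiv> \<lambda>a b. plane_vertex_label_fst n0 n1 a b + plane_vertex_label_snd n0 n1 a b"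
  shows "F a b < n0 * n1 \<and> (F a b = F a' b' \<longrightarrow> a = a' \<and> b = b')"
proof (cases "even n0 \<and> even n1")
  case True
  then have ev: "even n0" "even n1" by auto
  define L where "L a b = (if odd a then (b - 1) div 2 else n1 - 1 - (b - 1) div 2)" for a b :: nat
  define H where "H a b = (if odd b then (a - 1) div 2 else n0 - 1 - (a - 1) div 2)" for a b :: nat
  have F: "F a b = H a b * n1 + L a b" for a b
    unfolding F_def plane_vertex_label_fst_def plane_vertex_label_snd_def L_def H_def if_P[OF True]
    by (simp add: algebra_simps)
  have Llt: "L a b < n1" if "1 \<le> b" "b \<le> n1" for a b using that unfolding L_def by auto
  have Hlt: "H a b < n0" if "1 \<le> a" "a \<le> n0" for a b using that unfolding H_def by auto
  have halves: "(c - 1) div 2 < n div 2" if "even n" "1 \<le> c" "c \<le> n" for c n :: nat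
    using that by (auto elim!: evenE)
  have "H a b * n1 + L a b < (H a b + 1) * n1" using Llt b by simp
  also have "\<dots> \<le> n0 * n1" using Hlt[OF a(1,2), of b] by (intro mult_right_mono) auto
  finally have lt: "F a b < n0 * n1" using F by simp
  have "a = a' \<and> b = b'" if e: "F a b = F a' b'"
  proof -
    have eq: "H a b = H a' b'" "L a b = L a' b'"
      using mult_add_eq_imp_eq[OF Llt[OF b(1,2)] Llt[OF b(3,4)]] e unfolding F by auto
    have pa: "odd a \<longleftrightarrow> odd a'" and hb: "(b - 1) div 2 = (b' - 1) div 2"
      using half_or_reflected_eq[OF ev(2) halves[OF ev(2) b(1,2)] halves[OF ev(2) b(3,4)]] eq(2)
      unfolding L_def by blast+
    have pb: "odd b \<longleftrightarrow> odd b'" and ha: "(a - 1) div 2 = (a' - 1) div 2"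
      using half_or_reflected_eq[OF ev(1) halves[OF ev(1) a(1,2)] halves[OF ev(1) a(3,4)]] eq(1)
      unfolding H_def by blast+
    have "a = a'" using eq_if_div_2_eq_parity_eq[of "a - 1" "a' - 1"] pa ha a by simp
    moreover have "b = b'" using eq_if_div_2_eq_parity_eq[of "b - 1" "b' - 1"] pb hb b by simp
    ultimately show ?thesis ..
  qed
  with lt show ?thesis by blast
next
  case False
  define r0 where "r0 a b = (if even b then a - 1 else n0 - a)" for a b :: nat
  define r1 where "r1 a b = (if even a then b - 1 else n1 - b)" for a b :: nat
  have F: "F a b = r1 a b * n0 + r0 a b" for a b
    unfolding F_def plane_vertex_label_fst_def plane_vertex_label_snd_def r0_def r1_def if_not_P[OF False]
    by (simp add: algebra_simps)
  have r0lt: "r0 a b < n0" if "1 \<le> a" "a \<le> n0" for a b using that unfolding r0_def by auto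
  have r1lt: "r1 a b < n1" if "1 \<le> b" "b \<le> n1" for a b using that unfolding r1_def by auto
  have "r1 a b * n0 + r0 a b < (r1 a b + 1) * n0" using r0lt a by simp
  also have "\<dots> \<le> n1 * n0" using r1lt[OF b(1,2), of a] by (intro mult_right_mono) auto
  finally have lt: "F a b < n0 * n1" using F by (simp add: mult.commute)
  have "a = a' \<and> b = b'" if e: "F a b = F a' b'"
  proof -
    have eq: "r1 a b = r1 a' b'" "r0 a b = r0 a' b'"
      using mult_add_eq_imp_eq[OF r0lt[OF a(1,2)] r0lt[OF a(3,4)]] e unfolding F by auto
    show ?thesis
    proof (cases "odd n0")
      case True
      have "a = a' \<or> a + a' = n0 + 1" using eq(2) a unfolding r0_def by (auto split: if_splits)
      then have "even a \<longleftrightarrow> even a'" using True by presburger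
      then have "b = b'" using eq(1) b unfolding r1_def by (auto split: if_splits)
      then show ?thesis using eq(2) a unfolding r0_def by (auto split: if_splits)
    next
      case False
      with \<open>\<not> (even n0 \<and> even n1)\<close> have "odd n1" by simp
      have "b = b' \<or> b + b' = n1 + 1" using eq(1) b unfolding r1_def by (auto split: if_splits)
      then have "even b \<longleftrightarrow> even b'" using \<open>odd n1\<close> by presburger
      then have "a = a'" using eq(2) a unfolding r0_def by (auto split: if_splits)
      then show ?thesis using eq(1) b unfolding r1_def by (auto split: if_splits)
    qed
  qed
  with lt show ?thesis by blast
qed

text \<open>The high digits are read in the direction given by the parity of the first coordinate, so
  that they are reflected, like \<open>plane_vertex_label_fst\<close>, whenever that coordinate moves by one.\<close>
definition vertex_label :: "nat list \<Rightarrow> nat list \<Rightarrow> nat" where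
  "vertex_label ns x =
     plane_vertex_label_fst (ns ! 0) (ns ! 1) (x ! 0) (x ! 1)
     + plane_vertex_label_snd (ns ! 0) (ns ! 1) (x ! 0) (x ! 1)
     + ns ! 0 * ns ! 1 * mixed_radix_index (even (x ! 0)) (drop 2 ns) (drop 2 x)"

lemma vertex_label_less_inj:
  assumes x: "x \<in> grid_vertices (n0 # n1 # R)" and y: "y \<in> grid_vertices (n0 # n1 # R)"
  shows "vertex_label (n0 # n1 # R) x < prod_list (n0 # n1 # R) \<and>
    (vertex_label (n0 # n1 # R) x = vertex_label (n0 # n1 # R) y \<longrightarrow> x = y)"
proof -
  obtain a b r where xa: "x = a # b # r" "1 \<le> a" "a \<le> n0" "1 \<le> b" "b \<le> n1" "r \<in> grid_vertices R"
    using x Cons_Cons_in_grid_vertices_iff by blast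
  obtain a' b' r' where ya: "y = a' # b' # r'" "1 \<le> a'" "a' \<le> n0" "1 \<le> b'" "b' \<le> n1" "r' \<in> grid_vertices R"
    using y Cons_Cons_in_grid_vertices_iff by blast
  define F where "F a b = plane_vertex_label_fst n0 n1 a b + plane_vertex_label_snd n0 n1 a b" for a b
  define M where "M a r = mixed_radix_index (even a) R r" for a :: nat and r
  have F: "F a b < n0 * n1" "F a' b' < n0 * n1" "F a b = F a' b' \<longrightarrow> a = a' \<and> b = b'"
    using plane_vertex_label_less_inj[OF xa(2-3) ya(2-3) xa(4-5) ya(4-5)]
      plane_vertex_label_less_inj[OF ya(2-3) ya(2-3) ya(4-5) ya(4-5)] unfolding F_def by blast+
  have V: "vertex_label (n0 # n1 # R) x = M a r * (n0 * n1) + F a b"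
    and V': "vertex_label (n0 # n1 # R) y = M a' r' * (n0 * n1) + F a' b'"
    using xa ya by (simp_all add: vertex_label_def F_def M_def algebra_simps)
  have "M a r * (n0 * n1) + F a b < (M a r + 1) * (n0 * n1)" using F by simp
  also have "\<dots> \<le> prod_list R * (n0 * n1)"
    using mixed_radix_index_less[OF xa(6), of "even a"] unfolding M_def by (intro mult_right_mono) auto
  finally have "vertex_label (n0 # n1 # R) x < prod_list (n0 # n1 # R)" using V by (simp add: algebra_simps)
  moreover have "x = y" if e: "vertex_label (n0 # n1 # R) x = vertex_label (n0 # n1 # R) y"
  proof -
    have "M a r = M a' r'" "F a b = F a' b'" using mult_add_eq_imp_eq[OF F(1,2)] e V V' by auto
    then have "a = a'" "b = b'" "M a r = M a r'" using F(3) by auto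
    then have "r = r'" using mixed_radix_index_inj xa(6) ya(6) unfolding M_def by blast
    then show ?thesis using xa ya \<open>a = a'\<close> \<open>b = b'\<close> by simp
  qed
  ultimately show ?thesis by blast
qed

locale plane_grid =
  fixes ns :: "nat list" and n0 n1 :: nat and R :: "nat list"
  assumes ns_eq: "ns = n0 # n1 # R"
begin

lemma length_ge_2: "2 \<le> length ns"
  using ns_eq by simp

lemma bij_betw_vertex_label:
  shows "bij_betw (\<lambda>x. Suc (vertex_label ns x)) (grid_vertices ns) {1..card (grid_vertices ns)}"
proof (rule inj_on_card_imp_bij_betw)
  show "inj_on (\<lambda>x. Suc (vertex_label ns x)) (grid_vertices ns)"
    using vertex_label_less_inj ns_eq by (auto simp: inj_on_def)
  show "(\<lambda>x. Suc (vertex_label ns x)) ` grid_vertices ns \<subseteq> {1..card (grid_vertices ns)}"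
    using vertex_label_less_inj ns_eq by (auto simp: card_grid_vertices Suc_le_eq)
qed simp_all

end

locale plane_grid_cube = grid_cube ns V E \<tau> + plane_grid ns n0 n1 R for ns V E \<tau> n0 n1 R
begin

lemma drop_2_in_grid_vertices:
  assumes "x \<in> V"
  shows "drop 2 x \<in> grid_vertices R"
proof -
  have "x \<in> grid_vertices (n0 # n1 # R)" using V_sub ns_eq assms by auto
  then show ?thesis unfolding Cons_Cons_in_grid_vertices_iff by auto
qed

lemma drop_2_tau: "j < 2 \<Longrightarrow> x \<in> V \<Longrightarrow> drop 2 (\<tau> j x) = drop 2 x"
proof (rule nth_equalityI)
  assume j: "j < 2" and x: "x \<in> V"
  then have jl: "j < length ns" using length_ge_2 by simp
  have l: "length (\<tau> j x) = length x" using tau_step[OF jl x] grid_step_length by blast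
  then show "length (drop 2 (\<tau> j x)) = length (drop 2 x)" by simp
  fix i assume "i < length (drop 2 (\<tau> j x))"
  then have "2 + i < length ns" using l V_length[OF x] by simp
  then show "drop 2 (\<tau> j x) ! i = drop 2 x ! i" using tau_nth_other[OF jl x, of "2 + i"] j l V_length[OF x]
    by simp
qed

lemma sum_plane_vertex_label_fst:
  "2 * (\<Sum>x\<in>V. plane_vertex_label_fst n0 n1 (x ! 0) (x ! 1)) = plane_vertex_pair_fst n0 n1 * card V"
proof (rule double_sum_involution[where t = "\<tau> 0"])
  fix x assume x: "x \<in> V"
  have l: "0 < length ns" "1 < length ns" using length_ge_2 by auto
  show "\<tau> 0 x \<in> V" "\<tau> 0 (\<tau> 0 x) = x" using tau_in tau_tau x l by auto
  have "\<tau> 0 x ! 1 = x ! 1" using tau_nth_other[OF l(1) x l(2)] by simp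
  then show "plane_vertex_label_fst n0 n1 (x ! 0) (x ! 1) + plane_vertex_label_fst n0 n1 (\<tau> 0 x ! 0) (\<tau> 0 x ! 1) = plane_vertex_pair_fst n0 n1"
    using plane_vertex_label_fst_pair[of "\<tau> 0 x ! 0" "x ! 0" "x ! 1" n1 n0] tau_nth_dir[OF l(1) x]
      V_bounds[OF x l(2)] ns_eq by auto
qed

lemma sum_plane_vertex_label_snd:
  "2 * (\<Sum>x\<in>V. plane_vertex_label_snd n0 n1 (x ! 0) (x ! 1)) = plane_vertex_pair_snd n0 n1 * card V"
proof (rule double_sum_involution[where t = "\<tau> 1"])
  fix x assume x: "x \<in> V"
  have l: "0 < length ns" "1 < length ns" using length_ge_2 by auto
  show "\<tau> 1 x \<in> V" "\<tau> 1 (\<tau> 1 x) = x" using tau_in tau_tau x l by auto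
  have "\<tau> 1 x ! 0 = x ! 0" using tau_nth_other[OF l(2) x l(1)] by simp
  then show "plane_vertex_label_snd n0 n1 (x ! 0) (x ! 1) + plane_vertex_label_snd n0 n1 (\<tau> 1 x ! 0) (\<tau> 1 x ! 1) = plane_vertex_pair_snd n0 n1"
    using plane_vertex_label_snd_pair[of "\<tau> 1 x ! 1" "x ! 1" "x ! 0" n0 n1] tau_nth_dir[OF l(2) x]
      V_bounds[OF x l(1)] ns_eq by auto
qed

lemma sum_mixed_radix_index:
  assumes k: "k < 2"
  shows "2 * (\<Sum>x\<in>V. mixed_radix_index (even (x ! k)) R (drop 2 x)) = (prod_list R - 1) * card V"
proof (rule double_sum_involution[where t = "\<tau> k"])
  fix x assume x: "x \<in> V"
  have kl: "k < length ns" using k length_ge_2 by simp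
  show "\<tau> k x \<in> V" "\<tau> k (\<tau> k x) = x" using tau_in tau_tau x kl by auto
  have par: "even (\<tau> k x ! k) \<longleftrightarrow> odd (x ! k)" using tau_nth_dir[OF kl x] by auto
  show "mixed_radix_index (even (x ! k)) R (drop 2 x) + mixed_radix_index (even (\<tau> k x ! k)) R (drop 2 (\<tau> k x))
    = prod_list R - 1"
    unfolding drop_2_tau[OF k x]
    using mixed_radix_index_complement[OF drop_2_in_grid_vertices[OF x]] par
    by (cases "even (x ! k)") (auto simp: add.commute)
qed

lemma sum_vertex_label:
  "2 * (\<Sum>x\<in>V. Suc (vertex_label ns x)) =
     card V * (2 + plane_vertex_pair_fst n0 n1 + plane_vertex_pair_snd n0 n1 + n0 * n1 * (prod_list R - 1))"
proof -
  define F where "F x = plane_vertex_label_fst n0 n1 (x ! 0) (x ! 1)" for x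
  define G where "G x = plane_vertex_label_snd n0 n1 (x ! 0) (x ! 1)" for x
  define M where "M x = mixed_radix_index (even (x ! 0)) R (drop 2 x)" for x
  have "(\<Sum>x\<in>V. Suc (vertex_label ns x)) = (\<Sum>x\<in>V. 1 + F x + G x + n0 * n1 * M x)"
    unfolding vertex_label_def F_def G_def M_def using ns_eq by simp
  also have "\<dots> = card V + sum F V + sum G V + n0 * n1 * sum M V"
    by (simp only: sum.distrib sum_distrib_left) simp
  finally show ?thesis
    using sum_plane_vertex_label_fst sum_plane_vertex_label_snd sum_mixed_radix_index[of 0]
    unfolding F_def G_def M_def by (simp add: algebra_simps)
qed

end

section \<open>The edge labeling\<close>

text \<open>Edges of the \<open>n0 \<times> n1\<close> plane are listed in rows of \<open>2 n1 - 1\<close> slots: row \<open>a - 1\<close>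
  holds the direction-1 edges at height \<open>a\<close> (read backwards), row \<open>n0 - a - 1\<close> the direction-0
  edges between heights \<open>a\<close> and \<open>a + 1\<close>. Then the labels of the two plane edges at a vertex
  add up to an amount that depends on the vertex only through whether it is the lower or the
  upper end of each of them (\<open>plane_edge_labels_sum\<close>).\<close>
definition plane_edge_label_fst :: "nat \<Rightarrow> nat \<Rightarrow> nat \<Rightarrow> nat \<Rightarrow> nat" where
  "plane_edge_label_fst n0 n1 a b = (n0 - a - 1) * (2 * n1 - 1) + (n1 - 1 + (b - 1))"

definition plane_edge_label_snd :: "nat \<Rightarrow> nat \<Rightarrow> nat \<Rightarrow> nat \<Rightarrow> nat" where
  "plane_edge_label_snd n0 n1 a b = (a - 1) * (2 * n1 - 1) + (n1 - 1 - b)"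

definition plane_edge_count :: "nat \<Rightarrow> nat \<Rightarrow> nat" where
  "plane_edge_count n0 n1 = (n0 - 1) * (2 * n1 - 1) + (n1 - 1)"

lemma plane_edge_count_eq: "1 \<le> n0 \<Longrightarrow> 1 \<le> n1 \<Longrightarrow> plane_edge_count n0 n1 = (n0 - 1) * n1 + n0 * (n1 - 1)"
  unfolding plane_edge_count_def by (cases n0; cases n1) (simp_all add: algebra_simps)

lemma plane_edge_label_fst_less:
  assumes "1 \<le> a" "a < n0" "1 \<le> b" "b \<le> n1"
  shows "plane_edge_label_fst n0 n1 a b < plane_edge_count n0 n1"
proof -
  have "plane_edge_label_fst n0 n1 a b < (n0 - a - 1) * (2 * n1 - 1) + (2 * n1 - 1)"
    unfolding plane_edge_label_fst_def using assms by linarith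
  also have "\<dots> = (n0 - a) * (2 * n1 - 1)" using assms by (cases "n0 - a") (auto simp: algebra_simps)
  also have "\<dots> \<le> (n0 - 1) * (2 * n1 - 1)" using assms by (intro mult_right_mono) auto
  finally show ?thesis unfolding plane_edge_count_def by simp
qed

lemma plane_edge_label_snd_less:
  assumes "1 \<le> a" "a \<le> n0" "1 \<le> b" "b < n1"
  shows "plane_edge_label_snd n0 n1 a b < plane_edge_count n0 n1"
proof -
  have "plane_edge_label_snd n0 n1 a b < (a - 1) * (2 * n1 - 1) + (n1 - 1)"
    unfolding plane_edge_label_snd_def using assms by linarith
  also have "\<dots> \<le> plane_edge_count n0 n1"
    unfolding plane_edge_count_def using assms by (intro add_right_mono mult_right_mono) auto
  finally show ?thesis .
qed

lemma plane_edge_label_fst_inj: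
  assumes "1 \<le> a" "a < n0" "1 \<le> b" "b \<le> n1" "1 \<le> a'" "a' < n0" "1 \<le> b'" "b' \<le> n1"
    and "plane_edge_label_fst n0 n1 a b = plane_edge_label_fst n0 n1 a' b'"
  shows "a = a' \<and> b = b'"
proof -
  have "n1 - 1 + (b - 1) < 2 * n1 - 1" "n1 - 1 + (b' - 1) < 2 * n1 - 1" using assms by linarith+
  from mult_add_eq_imp_eq[OF this] assms(9)
  have "n0 - a - 1 = n0 - a' - 1" "n1 - 1 + (b - 1) = n1 - 1 + (b' - 1)"
    unfolding plane_edge_label_fst_def by blast+
  then show ?thesis using assms by linarith
qed

lemma plane_edge_label_snd_inj:
  assumes "1 \<le> a" "a \<le> n0" "1 \<le> b" "b < n1" "1 \<le> a'" "a' \<le> n0" "1 \<le> b'" "b' < n1"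
    and "plane_edge_label_snd n0 n1 a b = plane_edge_label_snd n0 n1 a' b'"
  shows "a = a' \<and> b = b'"
proof -
  have "n1 - 1 - b < 2 * n1 - 1" "n1 - 1 - b' < 2 * n1 - 1" using assms by linarith+
  from mult_add_eq_imp_eq[OF this] assms(9)
  have "a - 1 = a' - 1" "n1 - 1 - b = n1 - 1 - b'"
    unfolding plane_edge_label_snd_def by blast+
  then show ?thesis using assms by linarith
qed

lemma plane_edge_label_fst_neq_snd:
  assumes "1 \<le> b" "b \<le> n1" "1 \<le> b'" "b' < n1"
  shows "plane_edge_label_fst n0 n1 a b \<noteq> plane_edge_label_snd n0 n1 a' b'"
proof
  have "n1 - 1 + (b - 1) < 2 * n1 - 1" "n1 - 1 - b' < 2 * n1 - 1" using assms by linarith+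
  moreover assume "plane_edge_label_fst n0 n1 a b = plane_edge_label_snd n0 n1 a' b'"
  ultimately have "n1 - 1 + (b - 1) = n1 - 1 - b'"
    using mult_add_eq_imp_eq unfolding plane_edge_label_fst_def plane_edge_label_snd_def by blast
  with assms show False by linarith
qed

lemma plane_edge_labels_sum:
  assumes "1 \<le> a" "a < n0" "1 \<le> b" "b < n1" "e0 \<le> 1" "e1 \<le> 1"
  shows "plane_edge_label_fst n0 n1 a (b + e1) + plane_edge_label_snd n0 n1 (a + e0) b =
    (n0 - 2) * (2 * n1 - 1) + (2 * n1 - 3) + (2 * n1 - 1) * e0 + e1"
proof -
  obtain p where p: "n0 = Suc (a + p)" using less_imp_Suc_add[OF assms(2)] by blast
  obtain q where q: "n1 = Suc (b + q)" using less_imp_Suc_add[OF assms(4)] by blast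
  obtain a' where a': "a = Suc a'" using assms by (cases a) auto
  obtain b' where b': "b = Suc b'" using assms by (cases b) auto
  show ?thesis
    unfolding plane_edge_label_fst_def plane_edge_label_snd_def p q a' b' by (simp add: algebra_simps)
qed

definition dir_edge_count :: "nat list \<Rightarrow> nat \<Rightarrow> nat" where
  "dir_edge_count ns j = prod_list (ns[j := ns ! j - 1])"

definition dir_edge_offset :: "nat list \<Rightarrow> nat \<Rightarrow> nat" where
  "dir_edge_offset ns j = (\<Sum>i\<in>{2..<j}. dir_edge_count ns i)"

definition plane_edge_code :: "nat list \<Rightarrow> nat \<Rightarrow> nat list \<Rightarrow> nat" where
  "plane_edge_code ns j l =
     (if j = 0 then plane_edge_label_fst (ns ! 0) (ns ! 1) (l ! 0) (l ! 1)
      else plane_edge_label_snd (ns ! 0) (ns ! 1) (l ! 0) (l ! 1))"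

text \<open>Read along the parity of the other plane coordinate \<open>l ! (1 - j)\<close>, so that it is
  reflected when the edge is moved in that direction.\<close>
definition plane_edge_high :: "nat list \<Rightarrow> nat \<Rightarrow> nat list \<Rightarrow> nat" where
  "plane_edge_high ns j l = mixed_radix_index (even (l ! (1 - j))) (drop 2 ns) (drop 2 l)"

definition edge_code :: "nat list \<Rightarrow> nat \<Rightarrow> nat list \<Rightarrow> nat" where
  "edge_code ns j l =
     (if j \<le> 1 then plane_edge_code ns j l + plane_edge_count (ns ! 0) (ns ! 1) * plane_edge_high ns j l
      else plane_edge_count (ns ! 0) (ns ! 1) * prod_list (drop 2 ns) + dir_edge_offset ns j
        + vertex_label (ns[j := ns ! j - 1]) l)"

definition edge_label :: "nat list \<Rightarrow> nat list set \<Rightarrow> nat" where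
  "edge_label ns e =
     Suc (case the_inv_into (edge_index ns) (\<lambda>(j, l). edge_at j l) e of (j, l) \<Rightarrow> edge_code ns j l)"

lemma edge_label_edge_at: "(j, l) \<in> edge_index ns \<Longrightarrow> edge_label ns (edge_at j l) = Suc (edge_code ns j l)"
  unfolding edge_label_def using the_inv_into_f_f[OF inj_on_edge_at, of "(j, l)" ns] by simp

lemma dir_edge_offset_mono: "j \<le> j' \<Longrightarrow> dir_edge_offset ns j \<le> dir_edge_offset ns j'"
  unfolding dir_edge_offset_def by (rule sum_mono2) auto

lemma dir_edge_offset_Suc: "2 \<le> j \<Longrightarrow> dir_edge_offset ns (Suc j) = dir_edge_offset ns j + dir_edge_count ns j"
  by (simp add: dir_edge_offset_def)

context plane_grid
begin

lemma edge_index_dir0: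
  assumes "(0, l) \<in> edge_index ns"
  shows "\<exists>a b r. l = a # b # r \<and> 1 \<le> a \<and> a < n0 \<and> 1 \<le> b \<and> b \<le> n1 \<and> r \<in> grid_vertices R"
  using assms ns_eq by (auto simp: mem_edge_index_iff Cons_Cons_in_grid_vertices_iff)

lemma edge_index_dir1:
  assumes "(1, l) \<in> edge_index ns"
  shows "\<exists>a b r. l = a # b # r \<and> 1 \<le> a \<and> a \<le> n0 \<and> 1 \<le> b \<and> b < n1 \<and> r \<in> grid_vertices R"
  using assms ns_eq by (auto simp: mem_edge_index_iff Cons_Cons_in_grid_vertices_iff)

lemma plane_edge_code_less:
  assumes "(j, l) \<in> edge_index ns" "j \<le> 1"
  shows "plane_edge_code ns j l < plane_edge_count n0 n1 \<and> plane_edge_high ns j l < prod_list R"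
proof (cases "j = 0")
  case True
  with assms obtain a b r where "l = a # b # r" "1 \<le> a" "a < n0" "1 \<le> b" "b \<le> n1" "r \<in> grid_vertices R"
    using edge_index_dir0 by blast
  then show ?thesis using True ns_eq plane_edge_label_fst_less mixed_radix_index_less
    by (simp add: plane_edge_code_def plane_edge_high_def)
next
  case False
  with assms have "j = 1" by simp
  with assms obtain a b r where "l = a # b # r" "1 \<le> a" "a \<le> n0" "1 \<le> b" "b < n1" "r \<in> grid_vertices R"
    using edge_index_dir1 by blast
  then show ?thesis using \<open>j = 1\<close> ns_eq plane_edge_label_snd_less mixed_radix_index_less
    by (simp add: plane_edge_code_def plane_edge_high_def)
qed

lemma plane_edge_code_eq_imp_dir_eq:
  assumes jl: "(j, l) \<in> edge_index ns" "j \<le> 1" and jl': "(j', l') \<in> edge_index ns" "j' \<le> 1"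
    and code: "plane_edge_code ns j l = plane_edge_code ns j' l'"
  shows "j = j'"
proof (rule ccontr)
  assume "j \<noteq> j'"
  then consider "j = 0" "j' = 1" | "j = 1" "j' = 0" using jl(2) jl'(2) by linarith
  then show False
  proof cases
    case 1
    then show False using edge_index_dir0[of l] edge_index_dir1[of l'] jl jl' code ns_eq
      plane_edge_label_fst_neq_snd by (auto simp: plane_edge_code_def)
  next
    case 2
    then show False using edge_index_dir1[of l] edge_index_dir0[of l'] jl jl' code[symmetric] ns_eq
      plane_edge_label_fst_neq_snd by (auto simp: plane_edge_code_def)
  qed
qed

lemma plane_edge_code_inj:
  assumes jl: "(j, l) \<in> edge_index ns" "j \<le> 1" and jl': "(j', l') \<in> edge_index ns" "j' \<le> 1"
    and code: "plane_edge_code ns j l = plane_edge_code ns j' l'"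
    and high: "plane_edge_high ns j l = plane_edge_high ns j' l'"
  shows "j = j' \<and> l = l'"
proof -
  have "j = j'" using plane_edge_code_eq_imp_dir_eq[OF jl jl' code] .
  moreover have "l = l'"
  proof (cases "j = 0")
    case True
    obtain a b r where l: "l = a # b # r" "1 \<le> a" "a < n0" "1 \<le> b" "b \<le> n1" "r \<in> grid_vertices R"
      using edge_index_dir0 jl True by blast
    obtain a' b' r' where l': "l' = a' # b' # r'" "1 \<le> a'" "a' < n0" "1 \<le> b'" "b' \<le> n1" "r' \<in> grid_vertices R"
      using edge_index_dir0 jl' True \<open>j = j'\<close> by blast
    have "a = a' \<and> b = b'"
      using plane_edge_label_fst_inj[OF l(2-5) l'(2-5)] code True \<open>j = j'\<close> l l' ns_eq
      by (simp add: plane_edge_code_def)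
    moreover from this have "r = r'"
      using high True \<open>j = j'\<close> l l' ns_eq mixed_radix_index_inj by (simp add: plane_edge_high_def)
    ultimately show ?thesis using l l' by simp
  next
    case False
    then have "j = 1" using jl(2) by simp
    obtain a b r where l: "l = a # b # r" "1 \<le> a" "a \<le> n0" "1 \<le> b" "b < n1" "r \<in> grid_vertices R"
      using edge_index_dir1 jl \<open>j = 1\<close> by blast
    obtain a' b' r' where l': "l' = a' # b' # r'" "1 \<le> a'" "a' \<le> n0" "1 \<le> b'" "b' < n1" "r' \<in> grid_vertices R"
      using edge_index_dir1 jl' \<open>j = 1\<close> \<open>j = j'\<close> by blast
    have "a = a' \<and> b = b'"
      using plane_edge_label_snd_inj[OF l(2-5) l'(2-5)] code \<open>j = 1\<close> \<open>j = j'\<close> l l' ns_eq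
      by (simp add: plane_edge_code_def)
    moreover from this have "r = r'"
      using high \<open>j = 1\<close> \<open>j = j'\<close> l l' ns_eq mixed_radix_index_inj by (simp add: plane_edge_high_def)
    ultimately show ?thesis using l l' by simp
  qed
  ultimately show ?thesis ..
qed

lemma list_update_pred_high:
  assumes "2 \<le> j"
  shows "ns[j := ns ! j - 1] = n0 # n1 # R[j - 2 := R ! (j - 2) - 1]"
proof -
  obtain k where "j = Suc (Suc k)" using assms by (metis add_2_eq_Suc le_Suc_ex)
  then show ?thesis using ns_eq by simp
qed

lemma edge_code_plane_less:
  assumes "(j, l) \<in> edge_index ns" "j \<le> 1"
  shows "edge_code ns j l < plane_edge_count n0 n1 * prod_list R"
proof -
  let ?K = "plane_edge_count n0 n1"
  have b: "plane_edge_code ns j l < ?K" "plane_edge_high ns j l < prod_list R"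
    using plane_edge_code_less[OF assms] by auto
  have "edge_code ns j l = plane_edge_code ns j l + ?K * plane_edge_high ns j l"
    using assms ns_eq by (simp add: edge_code_def)
  also have "\<dots> < ?K * (plane_edge_high ns j l + 1)" using b by simp
  also have "\<dots> \<le> ?K * prod_list R" using b by (intro mult_left_mono) auto
  finally show ?thesis .
qed

lemma edge_code_high_bounds:
  assumes jl: "(j, l) \<in> edge_index ns" and j: "2 \<le> j"
  defines "B \<equiv> plane_edge_count n0 n1 * prod_list R"
  shows "B + dir_edge_offset ns j \<le> edge_code ns j l \<and> edge_code ns j l < B + dir_edge_offset ns (Suc j)"
proof -
  have "l \<in> grid_vertices (n0 # n1 # R[j - 2 := R ! (j - 2) - 1])"
    using jl list_update_pred_high[OF j] by (simp add: edge_index_def)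
  then have "vertex_label (ns[j := ns ! j - 1]) l < dir_edge_count ns j"
    using vertex_label_less_inj list_update_pred_high[OF j] unfolding dir_edge_count_def by metis
  moreover have "edge_code ns j l = B + dir_edge_offset ns j + vertex_label (ns[j := ns ! j - 1]) l"
    using j ns_eq by (simp add: edge_code_def B_def)
  ultimately show ?thesis using dir_edge_offset_Suc[OF j] by simp
qed

lemma card_edge_index_eq:
  assumes "1 \<le> n0" "1 \<le> n1"
  shows "card (edge_index ns) = plane_edge_count n0 n1 * prod_list R + dir_edge_offset ns (length ns)"
proof -
  have "card (edge_index ns) = (\<Sum>j\<in>{0..<2}. dir_edge_count ns j) + (\<Sum>j\<in>{2..<length ns}. dir_edge_count ns j)"
    unfolding card_edge_index atLeast0LessThan[symmetric] dir_edge_count_def[symmetric]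
    using length_ge_2 by (subst sum.atLeastLessThan_concat) auto
  also have "(\<Sum>j\<in>{0..<2}. dir_edge_count ns j) = plane_edge_count n0 n1 * prod_list R"
    using ns_eq assms by (simp add: numeral_2_eq_2 dir_edge_count_def plane_edge_count_eq algebra_simps)
  finally show ?thesis by (simp add: dir_edge_offset_def)
qed

lemma edge_code_less:
  assumes "1 \<le> n0" "1 \<le> n1" "(j, l) \<in> edge_index ns"
  shows "edge_code ns j l < card (edge_index ns)"
proof (cases "j \<le> 1")
  case True
  then show ?thesis using edge_code_plane_less[OF assms(3)] card_edge_index_eq[OF assms(1,2)] by simp
next
  case False
  have "j < length ns" using assms(3) by (simp add: mem_edge_index_iff)
  then have "dir_edge_offset ns (Suc j) \<le> dir_edge_offset ns (length ns)" by (intro dir_edge_offset_mono) simp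
  then show ?thesis using edge_code_high_bounds[OF assms(3)] False card_edge_index_eq[OF assms(1,2)] by simp
qed

lemma edge_code_high_inj:
  assumes jl: "(j, l) \<in> edge_index ns" "2 \<le> j" and jl': "(j', l') \<in> edge_index ns" "2 \<le> j'"
    and e: "edge_code ns j l = edge_code ns j' l'"
  shows "j = j' \<and> l = l'"
proof -
  have "j = j'"
  proof (rule ccontr)
    assume "j \<noteq> j'"
    then have "Suc j \<le> j' \<or> Suc j' \<le> j" by linarith
    then show False
      using edge_code_high_bounds[OF jl] edge_code_high_bounds[OF jl'] dir_edge_offset_mono[of "Suc j" j' ns]
        dir_edge_offset_mono[of "Suc j'" j ns] e by auto
  qed
  moreover have "vertex_label (ns[j := ns ! j - 1]) l = vertex_label (ns[j := ns ! j - 1]) l'"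
    using e \<open>j = j'\<close> jl(2) ns_eq by (simp add: edge_code_def)
  moreover have "l \<in> grid_vertices (n0 # n1 # R[j - 2 := R ! (j - 2) - 1])"
    "l' \<in> grid_vertices (n0 # n1 # R[j - 2 := R ! (j - 2) - 1])"
    using jl jl' \<open>j = j'\<close> list_update_pred_high[OF jl(2)] by (auto simp: edge_index_def)
  ultimately show ?thesis using vertex_label_less_inj list_update_pred_high[OF jl(2)] by metis
qed

lemma edge_code_inj:
  assumes jl: "(j, l) \<in> edge_index ns" and jl': "(j', l') \<in> edge_index ns"
    and e: "edge_code ns j l = edge_code ns j' l'"
  shows "j = j' \<and> l = l'"
proof (cases "j \<le> 1 \<and> j' \<le> 1")
  case True
  let ?K = "plane_edge_count n0 n1"
  have b: "plane_edge_code ns j l < ?K" "plane_edge_code ns j' l' < ?K"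
    using plane_edge_code_less jl jl' True by blast+
  have "plane_edge_high ns j l * ?K + plane_edge_code ns j l = plane_edge_high ns j' l' * ?K + plane_edge_code ns j' l'"
    using e True ns_eq by (simp add: edge_code_def algebra_simps)
  from mult_add_eq_imp_eq[OF b this] show ?thesis
    using plane_edge_code_inj jl jl' True by blast
next
  case False
  note low = edge_code_plane_less and high = edge_code_high_bounds
  consider "j \<le> 1" "2 \<le> j'" | "2 \<le> j" "j' \<le> 1" | "2 \<le> j" "2 \<le> j'" using False by linarith
  then show ?thesis
  proof cases
    case 1
    then show ?thesis using low[OF jl] high[OF jl'] e by fastforce
  next
    case 2
    then show ?thesis using low[OF jl'] high[OF jl] e by fastforce
  next
    case 3
    then show ?thesis using edge_code_high_inj jl jl' e by blast
  qed
qed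

lemma bij_betw_edge_label:
  assumes "1 \<le> n0" "1 \<le> n1"
  shows "bij_betw (edge_label ns) (grid_edges ns) {1..card (grid_edges ns)}"
proof -
  let ?code = "\<lambda>p. Suc (case p of (j, l) \<Rightarrow> edge_code ns j l)"
  have card: "card (grid_edges ns) = card (edge_index ns)"
    using bij_betw_same_card[OF bij_betw_edge_at] by simp
  have "bij_betw ?code (edge_index ns) {1..card (edge_index ns)}"
  proof (rule inj_on_card_imp_bij_betw)
    show "inj_on ?code (edge_index ns)" using edge_code_inj by (auto simp: inj_on_def)
    show "?code ` edge_index ns \<subseteq> {1..card (edge_index ns)}"
      using edge_code_less[OF assms] by (auto simp: Suc_le_eq)
  qed simp_all
  then have "bij_betw (?code \<circ> the_inv_into (edge_index ns) (\<lambda>(j, l). edge_at j l))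
      (grid_edges ns) {1..card (edge_index ns)}"
    using bij_betw_trans[OF bij_betw_the_inv_into[OF bij_betw_edge_at]] by blast
  moreover have "?code \<circ> the_inv_into (edge_index ns) (\<lambda>(j, l). edge_at j l) = edge_label ns"
    by (rule ext) (simp add: edge_label_def)
  ultimately show ?thesis using card by simp
qed

end

context plane_grid_cube
begin

lemma edge_label_tau:
  "j < length ns \<Longrightarrow> x \<in> V \<Longrightarrow> edge_label ns {x, \<tau> j x} = Suc (edge_code ns j (lower_end j x))"
  using lower_end_edge_at edge_label_edge_at by metis

lemma drop_2_lower_end: "j < 2 \<Longrightarrow> x \<in> V \<Longrightarrow> drop 2 (lower_end j x) = drop 2 x"
  using drop_2_tau unfolding lower_end_def by simp

lemma sum_upper_end_indicator:
  assumes "j < length ns"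
  shows "2 * (\<Sum>x\<in>V. x ! j - min (x ! j) (\<tau> j x ! j)) = card V"
proof -
  have "2 * (\<Sum>x\<in>V. x ! j - min (x ! j) (\<tau> j x ! j)) = 1 * card V"
  proof (rule double_sum_involution[where t = "\<tau> j"])
    fix x assume x: "x \<in> V"
    show "\<tau> j x \<in> V" "\<tau> j (\<tau> j x) = x" using tau_in tau_tau x assms by auto
    show "x ! j - min (x ! j) (\<tau> j x ! j) + (\<tau> j x ! j - min (\<tau> j x ! j) (\<tau> j (\<tau> j x) ! j)) = 1"
      using tau_tau[OF assms x] tau_nth_dir[OF assms x] by auto
  qed
  then show ?thesis by simp
qed

lemma plane_edge_labels_at_vertex:
  assumes x: "x \<in> V"
  defines "K \<equiv> plane_edge_count n0 n1"
  shows "edge_label ns {x, \<tau> 0 x} + edge_label ns {x, \<tau> 1 x} =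
    2 + ((n0 - 2) * (2 * n1 - 1) + (2 * n1 - 3)) + (2 * n1 - 1) * (x ! 0 - min (x ! 0) (\<tau> 0 x ! 0))
    + (x ! 1 - min (x ! 1) (\<tau> 1 x ! 1)) + K * mixed_radix_index (even (x ! 1)) R (drop 2 x)
    + K * mixed_radix_index (even (x ! 0)) R (drop 2 x)"
proof -
  have l: "0 < length ns" "1 < length ns" using length_ge_2 by auto
  let ?m0 = "min (x ! 0) (\<tau> 0 x ! 0)" and ?m1 = "min (x ! 1) (\<tau> 1 x ! 1)"
  have L0: "lower_end 0 x ! 0 = ?m0" "lower_end 0 x ! 1 = x ! 1"
    using lower_end_nth_dir lower_end_nth_other[OF l(1) x l(2)] by auto
  have L1: "lower_end 1 x ! 1 = ?m1" "lower_end 1 x ! 0 = x ! 0"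
    using lower_end_nth_dir lower_end_nth_other[OF l(2) x l(1)] by auto
  have "edge_code ns 0 (lower_end 0 x) =
      plane_edge_label_fst n0 n1 ?m0 (x ! 1) + K * mixed_radix_index (even (x ! 1)) R (drop 2 x)"
    using L0 drop_2_lower_end[of 0 x] x ns_eq
    unfolding edge_code_def plane_edge_code_def plane_edge_high_def K_def by simp
  moreover have "edge_code ns 1 (lower_end 1 x) =
      plane_edge_label_snd n0 n1 (x ! 0) ?m1 + K * mixed_radix_index (even (x ! 0)) R (drop 2 x)"
    using L1 drop_2_lower_end[of 1 x] x ns_eq
    unfolding edge_code_def plane_edge_code_def plane_edge_high_def K_def by simp
  moreover have "plane_edge_label_fst n0 n1 ?m0 (x ! 1) + plane_edge_label_snd n0 n1 (x ! 0) ?m1 =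
      (n0 - 2) * (2 * n1 - 1) + (2 * n1 - 3) + (2 * n1 - 1) * (x ! 0 - ?m0) + (x ! 1 - ?m1)"
  proof -
    have b: "1 \<le> x ! 0" "x ! 0 \<le> n0" "1 \<le> \<tau> 0 x ! 0" "\<tau> 0 x ! 0 \<le> n0"
      "1 \<le> x ! 1" "x ! 1 \<le> n1" "1 \<le> \<tau> 1 x ! 1" "\<tau> 1 x ! 1 \<le> n1"
      using V_bounds[OF x] V_bounds[OF tau_in[OF _ x]] l ns_eq by fastforce+
    have "x ! 0 = ?m0 + (x ! 0 - ?m0)" "x ! 1 = ?m1 + (x ! 1 - ?m1)" by auto
    then show ?thesis
      using plane_edge_labels_sum[of ?m0 n0 ?m1 n1 "x ! 0 - ?m0" "x ! 1 - ?m1"]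
        b tau_nth_dir[OF l(1) x] tau_nth_dir[OF l(2) x] by (auto simp: min_def)
  qed
  ultimately show ?thesis using edge_label_tau[OF l(1) x] edge_label_tau[OF l(2) x] by simp
qed

lemma sum_plane_edge_labels:
  "2 * (\<Sum>x\<in>V. edge_label ns {x, \<tau> 0 x} + edge_label ns {x, \<tau> 1 x}) =
     card V * (2 * (2 + (n0 - 2) * (2 * n1 - 1) + (2 * n1 - 3)) + (2 * n1 - 1) + 1
               + 2 * plane_edge_count n0 n1 * (prod_list R - 1))"
proof -
  let ?K = "plane_edge_count n0 n1" and ?C = "(n0 - 2) * (2 * n1 - 1) + (2 * n1 - 3)"
  have l: "0 < length ns" "1 < length ns" using length_ge_2 by auto
  define e0 where "e0 x = x ! 0 - min (x ! 0) (\<tau> 0 x ! 0)" for x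
  define e1 where "e1 x = x ! 1 - min (x ! 1) (\<tau> 1 x ! 1)" for x
  define M0 where "M0 x = mixed_radix_index (even (x ! 0)) R (drop 2 x)" for x
  define M1 where "M1 x = mixed_radix_index (even (x ! 1)) R (drop 2 x)" for x
  have "(\<Sum>x\<in>V. edge_label ns {x, \<tau> 0 x} + edge_label ns {x, \<tau> 1 x}) =
        (\<Sum>x\<in>V. 2 + ?C + (2 * n1 - 1) * e0 x + e1 x + ?K * M1 x + ?K * M0 x)"
    using plane_edge_labels_at_vertex unfolding e0_def e1_def M0_def M1_def by (simp add: add.assoc)
  also have "\<dots> = (\<Sum>x\<in>V. 2 + ?C) + (2 * n1 - 1) * sum e0 V + sum e1 V + ?K * sum M1 V + ?K * sum M0 V"
    by (simp only: sum.distrib sum_distrib_left)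
  finally have "2 * (\<Sum>x\<in>V. edge_label ns {x, \<tau> 0 x} + edge_label ns {x, \<tau> 1 x}) =
      2 * card V * (2 + ?C) + (2 * n1 - 1) * (2 * sum e0 V) + 2 * sum e1 V
      + ?K * (2 * sum M1 V) + ?K * (2 * sum M0 V)"
    by (simp add: algebra_simps)
  also have "\<dots> = card V * (2 * (2 + ?C) + (2 * n1 - 1) + 1 + 2 * ?K * (prod_list R - 1))"
    using sum_upper_end_indicator[OF l(1)] sum_upper_end_indicator[OF l(2)]
      sum_mixed_radix_index[of 0] sum_mixed_radix_index[of 1]
    unfolding e0_def e1_def M0_def M1_def by (simp add: algebra_simps)
  finally show ?thesis by (simp add: add.assoc)
qed

lemma drop_2_lower_end_tau0:
  assumes j: "2 \<le> j" "j < length ns" and x: "x \<in> V"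
  shows "drop 2 (lower_end j (\<tau> 0 x)) = drop 2 (lower_end j x)"
proof (rule nth_equalityI)
  have l0: "0 < length ns" using length_ge_2 by linarith
  have y: "\<tau> 0 x \<in> V" using tau_in l0 x by auto
  have l: "length (lower_end j x) = length ns" "length (lower_end j (\<tau> 0 x)) = length ns"
    using length_lower_end[OF j(2) x] length_lower_end[OF j(2) y] by auto
  then show "length (drop 2 (lower_end j (\<tau> 0 x))) = length (drop 2 (lower_end j x))" by simp
  fix i assume "i < length (drop 2 (lower_end j (\<tau> 0 x)))"
  then have i: "2 + i < length ns" using l by simp
  have "lower_end j (\<tau> 0 x) ! (2 + i) = lower_end j x ! (2 + i)"
  proof (cases "2 + i = j")
    case True
    have "\<tau> j (\<tau> 0 x) = \<tau> 0 (\<tau> j x)" using tau_commute[OF j(2) l0] j x by simp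
    moreover have "\<tau> 0 (\<tau> j x) ! j = \<tau> j x ! j" "\<tau> 0 x ! j = x ! j"
      using tau_nth_other[OF l0 tau_in[OF j(2) x] j(2)] tau_nth_other[OF l0 x j(2)] j by auto
    ultimately show ?thesis using lower_end_nth_dir True by simp
  next
    case False
    then show ?thesis
      using lower_end_nth_other[OF j(2) x i False] lower_end_nth_other[OF j(2) y i False]
        tau_nth_other[OF l0 x i] by simp
  qed
  then show "drop 2 (lower_end j (\<tau> 0 x)) ! i = drop 2 (lower_end j x) ! i" using l length_ge_2 by simp
qed

lemma sum_dir_edge_labels:
  assumes j: "2 \<le> j" "j < length ns"
  shows "2 * (\<Sum>x\<in>V. edge_label ns {x, \<tau> j x}) =
    card V * (2 * (1 + plane_edge_count n0 n1 * prod_list R + dir_edge_offset ns j)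
              + plane_vertex_pair_fst n0 n1 + plane_vertex_pair_snd n0 n1
              + n0 * n1 * (prod_list (R[j - 2 := R ! (j - 2) - 1]) - 1))"
proof -
  let ?R' = "R[j - 2 := R ! (j - 2) - 1]" and ?K = "plane_edge_count n0 n1"
  have l: "0 < length ns" "1 < length ns" using length_ge_2 by auto
  have upd: "ns[j := ns ! j - 1] = n0 # n1 # ?R'" using list_update_pred_high[OF j(1)] .
  define F where "F x = plane_vertex_label_fst n0 n1 (x ! 0) (x ! 1)" for x
  define G where "G x = plane_vertex_label_snd n0 n1 (x ! 0) (x ! 1)" for x
  define M where "M x = mixed_radix_index (even (x ! 0)) ?R' (drop 2 (lower_end j x))" for x
  have at_vertex: "edge_label ns {x, \<tau> j x} = (1 + ?K * prod_list R + dir_edge_offset ns j) + F x + G x + n0 * n1 * M x"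
    if x: "x \<in> V" for x
  proof -
    have "lower_end j x ! 0 = x ! 0" "lower_end j x ! 1 = x ! 1"
      using lower_end_nth_other[OF j(2) x] j l by auto
    then show ?thesis using edge_label_tau[OF j(2) x] j ns_eq upd
      unfolding edge_code_def vertex_label_def F_def G_def M_def by simp
  qed
  have sum_M: "2 * (\<Sum>x\<in>V. M x) = (prod_list ?R' - 1) * card V"
  proof (rule double_sum_involution[where t = "\<tau> 0"])
    fix x assume x: "x \<in> V"
    show "\<tau> 0 x \<in> V" "\<tau> 0 (\<tau> 0 x) = x" using tau_in tau_tau x l by auto
    have par: "even (\<tau> 0 x ! 0) \<longleftrightarrow> odd (x ! 0)" using tau_nth_dir[OF l(1) x] by auto
    have "lower_end j x \<in> grid_vertices (n0 # n1 # ?R')"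
      using lower_end_edge_at[OF j(2) x] upd by (simp add: edge_index_def)
    then have "drop 2 (lower_end j x) \<in> grid_vertices ?R'"
      by (auto simp: Cons_Cons_in_grid_vertices_iff)
    then show "M x + M (\<tau> 0 x) = prod_list ?R' - 1"
      unfolding M_def drop_2_lower_end_tau0[OF j x] using mixed_radix_index_complement par
      by (cases "even (x ! 0)") (auto simp: add.commute)
  qed
  have "(\<Sum>x\<in>V. edge_label ns {x, \<tau> j x}) =
      (\<Sum>x\<in>V. (1 + ?K * prod_list R + dir_edge_offset ns j) + F x + G x + n0 * n1 * M x)"
    using at_vertex by (rule sum.cong[OF refl])
  also have "\<dots> = card V * (1 + ?K * prod_list R + dir_edge_offset ns j) + sum F V + sum G V + n0 * n1 * sum M V"
    by (simp only: sum.distrib sum_distrib_left) (simp add: algebra_simps)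
  finally show ?thesis
    using sum_plane_vertex_label_fst sum_plane_vertex_label_snd sum_M
    unfolding F_def G_def by (simp add: algebra_simps)
qed

lemma sum_edge_label:
  "4 * (\<Sum>e\<in>E. edge_label ns e) =
    card V * ((2 * (2 + (n0 - 2) * (2 * n1 - 1) + (2 * n1 - 3)) + (2 * n1 - 1) + 1
               + 2 * plane_edge_count n0 n1 * (prod_list R - 1))
      + (\<Sum>j\<in>{2..<length ns}. 2 * (1 + plane_edge_count n0 n1 * prod_list R + dir_edge_offset ns j)
              + plane_vertex_pair_fst n0 n1 + plane_vertex_pair_snd n0 n1
              + n0 * n1 * (prod_list (R[j - 2 := R ! (j - 2) - 1]) - 1)))"
proof -
  let ?f = "\<lambda>x j. edge_label ns {x, \<tau> j x}"
  have split: "(\<Sum>j<length ns. g j) = g 0 + g 1 + (\<Sum>j\<in>{2..<length ns}. g j)" for g :: "nat \<Rightarrow> nat"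
  proof -
    have "(\<Sum>j<length ns. g j) = (\<Sum>j\<in>{0..<2}. g j) + (\<Sum>j\<in>{2..<length ns}. g j)"
      unfolding atLeast0LessThan[symmetric] using length_ge_2 by (subst sum.atLeastLessThan_concat) auto
    then show ?thesis by (simp add: numeral_2_eq_2)
  qed
  have "4 * (\<Sum>e\<in>E. edge_label ns e) = 2 * (\<Sum>x\<in>V. \<Sum>j<length ns. ?f x j)"
    using double_sum_edges[of "edge_label ns"] by simp
  also have "\<dots> = 2 * (\<Sum>x\<in>V. ?f x 0 + ?f x 1) + (\<Sum>j\<in>{2..<length ns}. 2 * (\<Sum>x\<in>V. ?f x j))"
    unfolding split by (simp add: sum.distrib sum_distrib_left sum.swap[of _ "{2..<length ns}"])
  finally show ?thesis
    using sum_plane_edge_labels sum_dir_edge_labels by (simp add: sum_distrib_left algebra_simps)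
qed

end

section \<open>Magic sums\<close>

lemma iso_subgraph_imp_plane_grid_cube:
  assumes "ns = n0 # n1 # R" "length ns = d"
    and "iso_subgraph (grid_vertices ns) (grid_edges ns) (cube_vertices d) (cube_edges d) V E"
  obtains \<tau> where "plane_grid_cube ns V E \<tau> n0 n1 R" "card V = 2 ^ d"
proof -
  obtain \<tau> where "grid_cube ns V E \<tau>" "card V = 2 ^ d"
    using iso_subgraph_imp_grid_cube assms(2,3) by blast
  moreover from this(1) have "plane_grid_cube ns V E \<tau> n0 n1 R"
    using assms(1) by (simp add: plane_grid_cube_def plane_grid_def)
  ultimately show ?thesis using that by blast
qed

lemma vertex_label_sums_agree:
  assumes "ns = n0 # n1 # R" "length ns = d"
    and "iso_subgraph (grid_vertices ns) (grid_edges ns) (cube_vertices d) (cube_edges d) V E"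
    and "iso_subgraph (grid_vertices ns) (grid_edges ns) (cube_vertices d) (cube_edges d) V' E'"
  shows "(\<Sum>x\<in>V. Suc (vertex_label ns x)) = (\<Sum>x\<in>V'. Suc (vertex_label ns x))"
proof -
  obtain \<tau> \<tau>' where c: "plane_grid_cube ns V E \<tau> n0 n1 R" "card V = 2 ^ d"
    and c': "plane_grid_cube ns V' E' \<tau>' n0 n1 R" "card V' = 2 ^ d"
    using iso_subgraph_imp_plane_grid_cube[OF assms(1,2)] assms(3,4) by metis
  have "2 * (\<Sum>x\<in>V. Suc (vertex_label ns x)) = 2 * (\<Sum>x\<in>V'. Suc (vertex_label ns x))"
    unfolding plane_grid_cube.sum_vertex_label[OF c(1)] plane_grid_cube.sum_vertex_label[OF c'(1)] c(2) c'(2) ..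
  then show ?thesis by simp
qed

lemma edge_label_sums_agree:
  assumes "ns = n0 # n1 # R" "length ns = d"
    and "iso_subgraph (grid_vertices ns) (grid_edges ns) (cube_vertices d) (cube_edges d) V E"
    and "iso_subgraph (grid_vertices ns) (grid_edges ns) (cube_vertices d) (cube_edges d) V' E'"
  shows "(\<Sum>e\<in>E. edge_label ns e) = (\<Sum>e\<in>E'. edge_label ns e)"
proof -
  obtain \<tau> \<tau>' where c: "plane_grid_cube ns V E \<tau> n0 n1 R" "card V = 2 ^ d"
    and c': "plane_grid_cube ns V' E' \<tau>' n0 n1 R" "card V' = 2 ^ d"
    using iso_subgraph_imp_plane_grid_cube[OF assms(1,2)] assms(3,4) by metis
  have "4 * (\<Sum>e\<in>E. edge_label ns e) = 4 * (\<Sum>e\<in>E'. edge_label ns e)"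
    unfolding plane_grid_cube.sum_edge_label[OF c(1)] plane_grid_cube.sum_edge_label[OF c'(1)] c(2) c'(2) ..
  then show ?thesis by simp
qed

lemma ex_common_value:
  assumes "\<And>a b a' b'. P a b \<Longrightarrow> P a' b' \<Longrightarrow> g a b = g a' b'"
  shows "\<exists>c. \<forall>a b. P a b \<longrightarrow> g a b = c"
proof (cases "\<exists>a b. P a b")
  case True
  then obtain a b where "P a b" by blast
  with assms show ?thesis by blast
qed blast

theorem theorem1:
  fixes d :: nat and ns :: "nat list"
  assumes "d \<ge> 2" and "length ns = d"
    and "\<forall>i<d. ns ! i \<ge> 2"
    and "sorted_wrt (\<ge>) ns"
  shows "(\<exists>f. magic_vertex_labeling (grid_vertices ns) (grid_edges ns)
                 (cube_vertices d) (cube_edges d) f) \<and>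
         (\<exists>g. magic_edge_labeling (grid_vertices ns) (grid_edges ns)
                 (cube_vertices d) (cube_edges d) g)"
proof -
  obtain n0 n1 R where ns: "ns = n0 # n1 # R"
    using assms(1,2) by (cases ns; cases "tl ns") auto
  have "1 \<le> n0" "1 \<le> n1" using assms(1-3) ns by force+
  then have "plane_grid ns n0 n1 R" using ns by (simp add: plane_grid_def)
  have "bij_betw (\<lambda>x. Suc (vertex_label ns x)) (grid_vertices ns) {1..card (grid_vertices ns)}"
    using plane_grid.bij_betw_vertex_label[OF \<open>plane_grid ns n0 n1 R\<close>] .
  moreover have "\<exists>c. \<forall>V E. iso_subgraph (grid_vertices ns) (grid_edges ns) (cube_vertices d) (cube_edges d) V E
      \<longrightarrow> (\<Sum>x\<in>V. Suc (vertex_label ns x)) = c"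
    by (rule ex_common_value) (rule vertex_label_sums_agree[OF ns assms(2)])
  moreover have "bij_betw (edge_label ns) (grid_edges ns) {1..card (grid_edges ns)}"
    using plane_grid.bij_betw_edge_label[OF \<open>plane_grid ns n0 n1 R\<close> \<open>1 \<le> n0\<close> \<open>1 \<le> n1\<close>] .
  moreover have "\<exists>c. \<forall>V E. iso_subgraph (grid_vertices ns) (grid_edges ns) (cube_vertices d) (cube_edges d) V E
      \<longrightarrow> (\<Sum>e\<in>E. edge_label ns e) = c"
    by (rule ex_common_value) (rule edge_label_sums_agree[OF ns assms(2)])
  ultimately show ?thesis unfolding magic_vertex_labeling_def magic_edge_labeling_def by blast
qed

end
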